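(* Let $A\in\mathbb{C}^{2^n\times2^n}$, $L=(A+A^\dagger)/2$, $H=(A-A^\dagger)/(2i)$, $t>0$, $u_0\in\mathbb{C}^{2^n}$ and $u(t)=e^{-At}u_0$. Let $c\in\mathbb{C}^M$, $k_1,\dots,k_M\in\mathbb{R}$, and $\mathcal{L}=\sum_{j=1}^Mc_je^{-it(k_jL+H)}$, and let $\epsilon_v\ge\|u(t)-\mathcal{L}u_0\|$. Suppose we have a single call to each of: - $U_Q$, an $(\alpha_Q,m_Q,\epsilon_Q)$-block encoding of $\mathcal{Q}(t)=\sum_{j=1}^M|j\rangle\langle j|\otimes e^{-it(k_jL+H)}$; - $(O_{c,l},O_{c,r})$, an $m_c$-qubit $(\|c\|_1,m_c,\epsilon_c)$ state-preparation pair for $c$; - $U_0$, a $(\|u_0\|,[0,m_N],\epsilon_0)$-block encoding of $u_0$. Then one can construct a $(\|c\|_1\|u_0\|,[m_c+m_Q,\,m_c+m_Q+m_N],\,\epsilon)$-block encoding of $u(t)$, as long as $$\epsilon_v+\|u_0\|(\epsilon_c+\|c\|_1\epsilon_Q)+\|c\|_1\epsilon_0\le\epsilon.$$ The block encoding yields a conditional state preparation that succeeds with probability at least $\frac{(\|u(t)\|-\epsilon')^2}{\|u_0\|^2\|c\|_1^2}$, where $\epsilon'=\epsilon_v+\|u_0\|(\epsilon_c+\|c\|_1\epsilon_Q)+\|c\|_1\epsilon_0$.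
   Context: $\|\cdot\|$ is the Euclidean/spectral norm. Operator block encoding: a unitary $U$ is an $(\alpha,m,\epsilon)$-block encoding of $B$ if $\|\alpha(\langle0|^{\otimes m}\otimes I)U(|0\rangle^{\otimes m}\otimes I)-B\|\le\epsilon$. Vector block encoding: a unitary $U$ is an $(\alpha,[a,b],\epsilon)$-block encoding of a vector $x$ if $\|x-\alpha(\langle0|^{\otimes a}\otimes I)U|0\rangle^{\otimes b}\|\le\epsilon$ (the $b$ input qubits are all initialized to $|0\rangle$ and the output is post-selected on $a$ ancilla qubits being $|0\rangle$; success means this post-selection occurs). State-preparation pair: for $z\in\mathbb{C}^M$ and $\gamma\ge\|z\|_1$, unitaries $(P_l,P_r)$ on $m$ qubits form a $(\gamma,m,\epsilon)$ state-preparation pair for $z$ if $P_l|0\rangle^{\otimes m}=\sum_jx_j|j\rangle$, $P_r|0\rangle^{\otimes m}=\sum_jy_j|j\rangle$ and $\sum_{j=1}^M|\gamma x_j^*y_j-z_j|\le\epsilon$.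
   Formalization: $U_Q$ is a block encoding of $\mathcal{Q}(t)$ with $\alpha_Q=1$, and the success-probability bound is asserted only when $\epsilon'\le\|u(t)\|$. The statement above fails without it. *)

theory Defs
  imports "HOL-Analysis.Analysis" "Jordan_Normal_Form.Matrix"
begin

definition adj :: "complex mat \<Rightarrow> complex mat" where
  "adj A = mat (dim_col A) (dim_row A) (\<lambda>(i,j). cnj (A $$ (j,i)))"

definition unitary_mat :: "complex mat \<Rightarrow> bool" where
  "unitary_mat U \<longleftrightarrow> dim_row U = dim_col U \<and> adj U * U = 1\<^sub>m (dim_row U)"

text \<open>Kronecker (tensor) product; the first factor is the more significant one,
  i.e. index of the basis state |a> (x) |b> is a * dim B + b.\<close>
definition kron :: "complex mat \<Rightarrow> complex mat \<Rightarrow> complex mat" where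
  "kron A B = mat (dim_row A * dim_row B) (dim_col A * dim_col B)
     (\<lambda>(i,j). A $$ (i div dim_row B, j div dim_col B) * B $$ (i mod dim_row B, j mod dim_col B))"

definition vnorm :: "complex vec \<Rightarrow> real" where
  "vnorm v = sqrt (\<Sum>i<dim_vec v. (cmod (v $ i))\<^sup>2)"

definition vnorm1 :: "complex vec \<Rightarrow> real" where
  "vnorm1 v = (\<Sum>i<dim_vec v. cmod (v $ i))"

definition opnorm :: "complex mat \<Rightarrow> real" where
  "opnorm A = Sup {vnorm (A *\<^sub>v v) | v. v \<in> carrier_vec (dim_col A) \<and> vnorm v \<le> 1}"

definition mexp :: "complex mat \<Rightarrow> complex mat" where
  "mexp A = mat (dim_row A) (dim_col A) (\<lambda>(i,j). \<Sum>k. (A ^\<^sub>m k) $$ (i,j) / of_nat (fact k))"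

definition ket :: "nat \<Rightarrow> nat \<Rightarrow> complex mat" where
  "ket m j = mat (2^m) 1 (\<lambda>(i,_). if i = j then 1 else 0)"

definition ketbra :: "nat \<Rightarrow> nat \<Rightarrow> complex mat" where
  "ketbra m j = ket m j * adj (ket m j)"

definition ket0v :: "nat \<Rightarrow> complex vec" where
  "ket0v m = unit_vec (2^m) 0"

definition bra0_I :: "nat \<Rightarrow> nat \<Rightarrow> complex mat" where
  "bra0_I m d = kron (adj (ket m 0)) (1\<^sub>m d)"

definition ket0_I :: "nat \<Rightarrow> nat \<Rightarrow> complex mat" where
  "ket0_I m d = kron (ket m 0) (1\<^sub>m d)"

definition block_encoding :: "complex mat \<Rightarrow> real \<Rightarrow> nat \<Rightarrow> real \<Rightarrow> complex mat \<Rightarrow> bool" where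
  "block_encoding U \<alpha> m \<epsilon> B \<longleftrightarrow>
     dim_row B = dim_col B \<and> U \<in> carrier_mat (2^m * dim_row B) (2^m * dim_row B) \<and> unitary_mat U \<and>
     opnorm (complex_of_real \<alpha> \<cdot>\<^sub>m (bra0_I m (dim_row B) * U * ket0_I m (dim_row B)) - B) \<le> \<epsilon>"

definition postsel :: "complex mat \<Rightarrow> nat \<Rightarrow> nat \<Rightarrow> complex vec" where
  "postsel U a b = (bra0_I a (2^(b - a)) * U) *\<^sub>v ket0v b"

definition vec_block_encoding ::
  "complex mat \<Rightarrow> real \<Rightarrow> nat \<Rightarrow> nat \<Rightarrow> real \<Rightarrow> complex vec \<Rightarrow> bool" where
  "vec_block_encoding U \<alpha> a b \<epsilon> x \<longleftrightarrow>
     a \<le> b \<and> U \<in> carrier_mat (2^b) (2^b) \<and> unitary_mat U \<and> dim_vec x = 2^(b - a) \<and>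
     vnorm (x - complex_of_real \<alpha> \<cdot>\<^sub>v postsel U a b) \<le> \<epsilon>"

definition success_prob :: "complex mat \<Rightarrow> nat \<Rightarrow> nat \<Rightarrow> real" where
  "success_prob U a b = (vnorm (postsel U a b))\<^sup>2"

text \<open>(Pl, Pr) is a (gamma, m, eps) state-preparation pair for z in C^M (M \<le> 2^m);
  basis states |j> for j = 0..M-1 correspond to indices 1..M of the paper.\<close>
definition state_prep_pair ::
  "complex mat \<Rightarrow> complex mat \<Rightarrow> real \<Rightarrow> nat \<Rightarrow> real \<Rightarrow> complex vec \<Rightarrow> bool" where
  "state_prep_pair Pl Pr \<gamma> m \<epsilon> z \<longleftrightarrow>
     dim_vec z \<le> 2^m \<and> \<gamma> \<ge> vnorm1 z \<and>
     Pl \<in> carrier_mat (2^m) (2^m) \<and> Pr \<in> carrier_mat (2^m) (2^m) \<and> unitary_mat Pl \<and> unitary_mat Pr \<and>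
     (let x = Pl *\<^sub>v ket0v m; y = Pr *\<^sub>v ket0v m in
       (\<Sum>j<dim_vec z. cmod (complex_of_real \<gamma> * cnj (x $ j) * y $ j - z $ j)) \<le> \<epsilon>)"

definition herm_part :: "complex mat \<Rightarrow> complex mat" where
  "herm_part A = (1/2 :: complex) \<cdot>\<^sub>m (A + adj A)"

definition antiherm_part :: "complex mat \<Rightarrow> complex mat" where
  "antiherm_part A = (1 / (2 * \<i>)) \<cdot>\<^sub>m (A - adj A)"

definition evol :: "complex mat \<Rightarrow> real \<Rightarrow> real \<Rightarrow> complex mat" where
  "evol A t k = mexp ((- \<i> * complex_of_real t) \<cdot>\<^sub>m
      (complex_of_real k \<cdot>\<^sub>m herm_part A + antiherm_part A))"

definition Qmat :: "complex mat \<Rightarrow> real \<Rightarrow> (nat \<Rightarrow> real) \<Rightarrow> nat \<Rightarrow> nat \<Rightarrow> nat \<Rightarrow> complex mat" where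
  "Qmat A t k M mc n = foldr (\<lambda>j acc. kron (ketbra mc j) (evol A t (k j)) + acc) [0..<M]
      (0\<^sub>m (2^mc * 2^n) (2^mc * 2^n))"

definition LCU :: "complex mat \<Rightarrow> real \<Rightarrow> (nat \<Rightarrow> real) \<Rightarrow> complex vec \<Rightarrow> nat \<Rightarrow> complex mat" where
  "LCU A t k c n = foldr (\<lambda>j acc. (c $ j) \<cdot>\<^sub>m evol A t (k j) + acc) [0..<dim_vec c]
      (0\<^sub>m (2^n) (2^n))"

text \<open>The construction, on registers [Q-ancilla (mQ)] [c-register (mc)] [system (n)]:
  (I (x) Ocl^dagger (x) I) U_Q (I (x) Ocr (x) I) (I (x) I (x) U0). Each oracle is used once.\<close>
definition lcu_circuit ::
  "nat \<Rightarrow> nat \<Rightarrow> nat \<Rightarrow> complex mat \<Rightarrow> complex mat \<Rightarrow> complex mat \<Rightarrow> complex mat \<Rightarrow> complex mat" where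
  "lcu_circuit mQ mc n UQ Ocl Ocr U0 =
     kron (1\<^sub>m (2^mQ)) (kron (adj Ocl) (1\<^sub>m (2^n))) * UQ *
     kron (1\<^sub>m (2^mQ)) (kron Ocr (1\<^sub>m (2^n))) *
     kron (1\<^sub>m (2^mQ * 2^mc)) U0"

end

theory Submission
  imports Defs "Jordan_Normal_Form.Determinant"
begin

text \<open>
  The circuit prepares \<open>|0>|y>|v>\<close> with \<open>y = O_{c,r}|0>\<close> and \<open>v = U_0|0>\<close>, applies \<open>U_Q\<close>
  and \<open>O_{c,l}^dagger\<close>, and post-selects all ancillas on \<open>|0>\<close>. Only the top-left block \<open>B\<close>
  of \<open>U_Q\<close> survives, so the post-selected vector is \<open>(<x| (x) I) B (y (x) v)\<close> with
  \<open>x = O_{c,l}|0>\<close>. Replacing \<open>B\<close> by \<open>Q(t)\<close> turns it into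
  \<open>sum_j x_j^* y_j e^{-it(k_j L + H)} v\<close>, and replacing \<open>||c||_1 x_j^* y_j\<close> by \<open>c_j\<close> and
  \<open>||u_0|| v\<close> by \<open>u_0\<close> turns that into the LCU approximation of \<open>u(t)\<close>. The evolutions
  \<open>e^{-it(k_j L + H)}\<close> are unitary (the generator is anti-Hermitian) and \<open>x, y\<close> are unit
  vectors, so the three replacements cost at most \<open>||c||_1 ||u_0|| eps_Q\<close>, \<open>||u_0|| eps_c\<close> and
  \<open>||c||_1 eps_0\<close>. The success probability is the squared norm of the post-selected vector,
  which the triangle inequality bounds below by \<open>(||u(t)|| - eps') / (||c||_1 ||u_0||)\<close>.
\<close>

lemma sum_lessThan_mult_split:
  fixes f :: "nat \<Rightarrow> 'a :: comm_monoid_add"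
  shows "(\<Sum>l<m * n. f l) = (\<Sum>a<m. \<Sum>b<n. f (a * n + b))"
proof -
  have "(\<Sum>l<m * n. f l) = (\<Sum>(a, b)\<in>{..<m} \<times> {..<n}. f (a * n + b))"
  proof (rule sum.reindex_bij_witness[where j = "\<lambda>l. (l div n, l mod n)" and i = "\<lambda>(a, b). a * n + b"])
    fix l assume l: "l \<in> {..<m * n}"
    then have "0 < n" by (cases n) auto
    with l show "(l div n, l mod n) \<in> {..<m} \<times> {..<n}"
      by (auto simp: less_mult_imp_div_less)
  next
    fix p assume "p \<in> {..<m} \<times> {..<n}"
    then obtain a b where p: "p = (a, b)" "a < m" "b < n" by blast
    have "a * n + b < (a + 1) * n" using p by simp
    also have "\<dots> \<le> m * n" using p by (intro mult_right_mono) auto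
    finally show "(case p of (a, b) \<Rightarrow> a * n + b) \<in> {..<m * n}" using p by simp
  qed (auto split: prod.splits)
  then show ?thesis by (simp add: sum.cartesian_product)
qed

lemma mult_add_less_mult: "p < a \<Longrightarrow> r < b \<Longrightarrow> p * b + r < a * (b :: nat)"
proof -
  assume "p < a" "r < b"
  then have "p * b + r < Suc p * b" by simp
  also have "\<dots> \<le> a * b" using \<open>p < a\<close> by (intro mult_right_mono) auto
  finally show ?thesis .
qed

lemma mult_add_div_mod:
  fixes a b d :: nat
  assumes "b < d"
  shows "(a * d + b) div d = a" "(a * d + b) mod d = b"
  using assms by simp_all

lemma less_mult_index_cases:
  fixes l a b :: nat
  assumes "l < a * b"
  obtains p r where "l = p * b + r" "p < a" "r < b"
proof
  have "0 < b" using assms by (cases b) auto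
  show "l = l div b * b + l mod b" by simp
  show "l div b < a" using assms by (simp add: less_mult_imp_div_less)
  show "l mod b < b" using \<open>0 < b\<close> by simp
qed

lemma index_mult_mat_sum:
  assumes "i < dim_row A" "j < dim_col B" "dim_col A = dim_row B"
  shows "(A * B) $$ (i, j) = (\<Sum>l<dim_row B. A $$ (i, l) * B $$ (l, j))"
  using assms by (simp add: scalar_prod_def lessThan_atLeast0)

lemma index_mult_mat_vec_sum:
  assumes "i < dim_row A" "dim_col A = dim_vec v"
  shows "(A *\<^sub>v v) $ i = (\<Sum>l<dim_vec v. A $$ (i, l) * v $ l)"
  using assms by (simp add: scalar_prod_def lessThan_atLeast0)

lemma assoc_mult4_mat_vec:
  assumes "A \<in> carrier_mat n n" "B \<in> carrier_mat n n" "C \<in> carrier_mat n n" "D \<in> carrier_mat n n"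
    and "v \<in> carrier_vec n"
  shows "(A * B * C * D) *\<^sub>v v = A *\<^sub>v (B *\<^sub>v (C *\<^sub>v (D *\<^sub>v v)))"
proof -
  have AB: "A * B \<in> carrier_mat n n" and ABC: "A * B * C \<in> carrier_mat n n"
    using assms by auto
  have "(A * B * C * D) *\<^sub>v v = (A * B * C) *\<^sub>v (D *\<^sub>v v)"
    using ABC assms by (intro assoc_mult_mat_vec)
  also have "\<dots> = (A * B) *\<^sub>v (C *\<^sub>v (D *\<^sub>v v))"
    using AB assms by (intro assoc_mult_mat_vec) auto
  also have "\<dots> = A *\<^sub>v (B *\<^sub>v (C *\<^sub>v (D *\<^sub>v v)))"
    using assms by (intro assoc_mult_mat_vec) auto
  finally show ?thesis .
qed

subsection \<open>Conjugate transpose and unitary matrices\<close>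

lemma adj_dims [simp]: "dim_row (adj A) = dim_col A" "dim_col (adj A) = dim_row A"
  by (auto simp: adj_def)

lemma adj_index [simp]: "i < dim_col A \<Longrightarrow> j < dim_row A \<Longrightarrow> adj A $$ (i, j) = cnj (A $$ (j, i))"
  by (simp add: adj_def)

lemma adj_carrier_mat [simp]: "A \<in> carrier_mat m n \<Longrightarrow> adj A \<in> carrier_mat n m"
  by (intro carrier_matI) auto

lemma adj_adj [simp]: "adj (adj A) = A"
  by (intro eq_matI) auto

lemma adj_one [simp]: "adj (1\<^sub>m n) = 1\<^sub>m n"
  by (intro eq_matI) auto

lemma adj_mult: "dim_col A = dim_row B \<Longrightarrow> adj (A * B) = adj B * adj A"
  by (intro eq_matI)
    (auto simp: index_mult_mat_sum sum_distrib_left mult.commute simp del: index_mult_mat(1)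
      intro!: sum.cong)

lemma adj_add: "A \<in> carrier_mat m n \<Longrightarrow> B \<in> carrier_mat m n \<Longrightarrow> adj (A + B) = adj A + adj B"
  by (intro eq_matI) auto

lemma adj_smult: "adj (a \<cdot>\<^sub>m A) = cnj a \<cdot>\<^sub>m adj A"
  by (intro eq_matI) auto

lemma unitary_matD: "U \<in> carrier_mat d d \<Longrightarrow> unitary_mat U \<Longrightarrow> adj U * U = 1\<^sub>m d"
  by (simp add: unitary_mat_def)

lemma unitary_matI: "U \<in> carrier_mat d d \<Longrightarrow> adj U * U = 1\<^sub>m d \<Longrightarrow> unitary_mat U"
  by (simp add: unitary_mat_def)

lemma unitary_mat_one: "unitary_mat (1\<^sub>m d)"
  by (simp add: unitary_mat_def)

lemma unitary_mat_mult:
  assumes A: "A \<in> carrier_mat d d" "unitary_mat A" and B: "B \<in> carrier_mat d d" "unitary_mat B"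
  shows "unitary_mat (A * B)"
proof (rule unitary_matI)
  show "A * B \<in> carrier_mat d d" using A B by simp
  have "adj (A * B) * (A * B) = adj B * ((adj A * A) * B)"
    using A B by (simp add: adj_mult assoc_mult_mat[of _ d d _ d _ d])
  also have "\<dots> = 1\<^sub>m d"
    using A B by (simp add: unitary_matD)
  finally show "adj (A * B) * (A * B) = 1\<^sub>m d" .
qed

lemma unitary_mat_adj:
  assumes U: "U \<in> carrier_mat d d" "unitary_mat U"
  shows "unitary_mat (adj U)"
proof (rule unitary_matI)
  show "adj U \<in> carrier_mat d d" using U by simp
  show "adj (adj U) * adj U = 1\<^sub>m d"
    using U mat_mult_left_right_inverse[of "adj U" d U] by (simp add: unitary_matD)
qed

subsection \<open>The matrix exponential\<close>

lemma pow_mat_add: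
  assumes A: "A \<in> carrier_mat d d"
  shows "A ^\<^sub>m (a + b) = A ^\<^sub>m a * A ^\<^sub>m b"
proof (induction b)
  case (Suc b)
  have "A ^\<^sub>m (a + Suc b) = (A ^\<^sub>m a * A ^\<^sub>m b) * A" using Suc by simp
  also have "\<dots> = A ^\<^sub>m a * (A ^\<^sub>m b * A)"
    using A by (intro assoc_mult_mat[of _ d d _ d _ d]) auto
  finally show ?case by simp
qed (use A in simp)

lemma pow_mat_commute: "A \<in> carrier_mat d d \<Longrightarrow> A * A ^\<^sub>m k = A ^\<^sub>m k * A"
  using pow_mat_add[of A d 1 k] pow_mat_add[of A d k 1] by (simp add: add.commute)

lemma adj_pow_mat:
  assumes A: "A \<in> carrier_mat d d"
  shows "adj (A ^\<^sub>m k) = adj A ^\<^sub>m k"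
proof (induction k)
  case (Suc k)
  have "adj (A ^\<^sub>m Suc k) = adj A * adj A ^\<^sub>m k"
    using A Suc by (simp add: adj_mult)
  also have "\<dots> = adj A ^\<^sub>m k * adj A"
    using A by (intro pow_mat_commute[of _ d]) auto
  finally show ?case by simp
qed (use A in simp)

lemma pow_mat_uminus:
  fixes A :: "complex mat"
  assumes A: "A \<in> carrier_mat d d"
  shows "(- A) ^\<^sub>m k = (- 1) ^ k \<cdot>\<^sub>m A ^\<^sub>m k"
proof (induction k)
  case (Suc k)
  have "(- A) ^\<^sub>m Suc k = - ((- 1) ^ k \<cdot>\<^sub>m (A ^\<^sub>m k * A))"
    using A Suc by (simp add: mult_smult_assoc_mat[of _ d d _ d])
  then show ?case by (intro eq_matI) auto
qed (use A in auto)

lemma pow_mat_index_bound: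
  assumes A: "A \<in> carrier_mat d d" and bound: "\<And>i j. i < d \<Longrightarrow> j < d \<Longrightarrow> cmod (A $$ (i, j)) \<le> b"
    and "0 \<le> b" "i < d" "j < d"
  shows "cmod ((A ^\<^sub>m k) $$ (i, j)) \<le> (d * b) ^ k"
  using \<open>i < d\<close> \<open>j < d\<close>
proof (induction k arbitrary: j)
  case (Suc k)
  have "cmod ((A ^\<^sub>m Suc k) $$ (i, j)) = cmod (\<Sum>l<d. (A ^\<^sub>m k) $$ (i, l) * A $$ (l, j))"
    using A Suc.prems by (simp add: index_mult_mat_sum del: index_mult_mat(1))
  also have "\<dots> \<le> (\<Sum>l<d. cmod ((A ^\<^sub>m k) $$ (i, l)) * cmod (A $$ (l, j)))"
    by (rule order_trans[OF norm_sum]) (simp add: norm_mult)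
  also have "\<dots> \<le> (\<Sum>l<d. (d * b) ^ k * b)"
    using Suc bound \<open>0 \<le> b\<close> by (intro sum_mono mult_mono) auto
  finally show ?case by (simp add: algebra_simps)
qed (use A in auto)

lemma mexp_dims [simp]: "dim_row (mexp X) = dim_row X" "dim_col (mexp X) = dim_col X"
  by (auto simp: mexp_def)

lemma mexp_index:
  "i < dim_row X \<Longrightarrow> j < dim_col X \<Longrightarrow> mexp X $$ (i, j) = (\<Sum>k. (X ^\<^sub>m k) $$ (i, j) / fact k)"
  by (simp add: mexp_def)

lemma summable_mexp_series:
  fixes X :: "complex mat"
  assumes X: "X \<in> carrier_mat d d" and "i < d" "j < d"
  shows "summable (\<lambda>k. norm ((X ^\<^sub>m k) $$ (i, j) / fact k))"
proof -
  define b where "b = (\<Sum>p<d. \<Sum>q<d. cmod (X $$ (p, q)))"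
  have entry: "cmod (X $$ (p, q)) \<le> b" if "p < d" "q < d" for p q
  proof -
    have "cmod (X $$ (p, q)) \<le> (\<Sum>q'<d. cmod (X $$ (p, q')))"
      using that by (intro member_le_sum) auto
    also have "\<dots> \<le> b"
      unfolding b_def using that by (intro member_le_sum[of p] sum_nonneg) auto
    finally show ?thesis .
  qed
  have "0 \<le> b" unfolding b_def by (intro sum_nonneg) auto
  have "norm ((X ^\<^sub>m k) $$ (i, j) / fact k) \<le> inverse (fact k) * (d * b) ^ k" for k
    using pow_mat_index_bound[OF X entry \<open>0 \<le> b\<close> \<open>i < d\<close> \<open>j < d\<close>, of k]
    by (simp add: norm_divide divide_right_mono field_simps)
  then show ?thesis
    by (intro summable_comparison_test[OF _ summable_exp[of "d * b"]]) auto
qed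

lemma alternating_fact_sum:
  "(\<Sum>a\<le>n. (- 1) ^ a / (fact a * fact (n - a)) :: complex) = (if n = 0 then 1 else 0)"
proof -
  have "(\<Sum>a\<le>n. (- 1) ^ a / (fact a * fact (n - a)) :: complex)
      = (\<Sum>a\<le>n. (- 1) ^ a * of_nat (n choose a)) / fact n"
    by (simp add: sum_divide_distrib binomial_fact field_simps)
  then show ?thesis by (simp add: choose_alternating_sum)
qed

lemma cauchy_coeff_mexp_uminus:
  fixes X :: "complex mat"
  assumes X: "X \<in> carrier_mat d d" and i: "i < d" and j: "j < d"
  shows "(\<Sum>l<d. \<Sum>a\<le>n. ((- X) ^\<^sub>m a) $$ (i, l) / fact a * ((X ^\<^sub>m (n - a)) $$ (l, j) / fact (n - a)))
    = (if n = 0 then 1\<^sub>m d $$ (i, j) else 0)"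
proof -
  have "(\<Sum>l<d. \<Sum>a\<le>n. ((- X) ^\<^sub>m a) $$ (i, l) / fact a * ((X ^\<^sub>m (n - a)) $$ (l, j) / fact (n - a)))
      = (\<Sum>a\<le>n. (- 1) ^ a / (fact a * fact (n - a))
          * (\<Sum>l<d. (X ^\<^sub>m a) $$ (i, l) * (X ^\<^sub>m (n - a)) $$ (l, j)))"
    unfolding sum_distrib_left using X i
    by (subst sum.swap) (intro sum.cong refl; simp add: pow_mat_uminus)
  also have "\<dots> = (\<Sum>a\<le>n. (- 1) ^ a / (fact a * fact (n - a))) * (X ^\<^sub>m n) $$ (i, j)"
  proof (unfold sum_distrib_right, rule sum.cong[OF refl])
    fix a assume "a \<in> {..n}"
    then have "X ^\<^sub>m n = X ^\<^sub>m a * X ^\<^sub>m (n - a)"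
      using pow_mat_add[OF X, of a "n - a"] by simp
    then show "(- 1) ^ a / (fact a * fact (n - a)) * (\<Sum>l<d. (X ^\<^sub>m a) $$ (i, l) * (X ^\<^sub>m (n - a)) $$ (l, j))
        = (- 1) ^ a / (fact a * fact (n - a)) * (X ^\<^sub>m n) $$ (i, j)"
      using X i j by (simp add: index_mult_mat_sum del: index_mult_mat(1))
  qed
  also have "\<dots> = (if n = 0 then 1\<^sub>m d $$ (i, j) else 0)"
    using X i j by (simp add: alternating_fact_sum)
  finally show ?thesis .
qed

lemma mexp_uminus_mult:
  fixes X :: "complex mat"
  assumes X: "X \<in> carrier_mat d d"
  shows "mexp (- X) * mexp X = 1\<^sub>m d"
proof (rule eq_matI)
  fix i j assume "i < dim_row (1\<^sub>m d)" "j < dim_col (1\<^sub>m d)"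
  then have i: "i < d" and j: "j < d" by auto
  define s where "s (Y :: complex mat) p q k = (Y ^\<^sub>m k) $$ (p, q) / fact k" for Y p q k
  have summable_s: "summable (\<lambda>k. norm (s Y p q k))"
    if "Y \<in> carrier_mat d d" "p < d" "q < d" for Y p q
    unfolding s_def using summable_mexp_series that by blast
  have X': "- X \<in> carrier_mat d d" using X by simp
  have "(mexp (- X) * mexp X) $$ (i, j) = (\<Sum>l<d. (\<Sum>k. s (- X) i l k) * (\<Sum>k. s X l j k))"
    using X i j by (simp add: index_mult_mat_sum mexp_index s_def del: index_mult_mat(1))
  also have "\<dots> = (\<Sum>l<d. \<Sum>n. \<Sum>a\<le>n. s (- X) i l a * s X l j (n - a))"
    using i j by (intro sum.cong refl Cauchy_product summable_s X X') auto
  also have "\<dots> = (\<Sum>n. \<Sum>l<d. \<Sum>a\<le>n. s (- X) i l a * s X l j (n - a))"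
    using i j by (intro suminf_sum[symmetric] summable_Cauchy_product summable_s X X') auto
  also have "\<dots> = (\<Sum>n. if n = 0 then 1\<^sub>m d $$ (i, j) else 0)"
    unfolding s_def cauchy_coeff_mexp_uminus[OF X i j] ..
  also have "\<dots> = 1\<^sub>m d $$ (i, j)"
    by (rule sums_unique[OF sums_single, symmetric])
  finally show "(mexp (- X) * mexp X) $$ (i, j) = 1\<^sub>m d $$ (i, j)" .
qed (use X in auto)

lemma adj_mexp:
  fixes X :: "complex mat"
  assumes X: "X \<in> carrier_mat d d"
  shows "adj (mexp X) = mexp (adj X)"
proof (rule eq_matI)
  fix i j assume "i < dim_row (mexp (adj X))" "j < dim_col (mexp (adj X))"
  then have i: "i < d" and j: "j < d" using X by auto
  have series: "(\<lambda>k. (X ^\<^sub>m k) $$ (j, i) / fact k) sums mexp X $$ (j, i)"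
    using X i j summable_mexp_series[OF X j i]
    by (simp add: mexp_index summable_norm_cancel summable_sums)
  have "(\<lambda>k. (adj X ^\<^sub>m k) $$ (i, j) / fact k) sums cnj (mexp X $$ (j, i))"
    using sums_cnj[THEN iffD2, OF series] X i j by (simp add: adj_pow_mat[OF X, symmetric])
  then show "adj (mexp X) $$ (i, j) = mexp (adj X) $$ (i, j)"
    using X i j by (simp add: mexp_index sums_iff)
qed (use X in auto)

lemma unitary_mexp_hermitian:
  fixes K :: "complex mat"
  assumes K: "K \<in> carrier_mat d d" and herm: "adj K = K"
  shows "unitary_mat (mexp ((- \<i> * complex_of_real t) \<cdot>\<^sub>m K))"
proof -
  define X where "X = (- \<i> * complex_of_real t) \<cdot>\<^sub>m K"
  have X: "X \<in> carrier_mat d d" using K by (simp add: X_def)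
  have "adj X = - X"
    unfolding X_def adj_smult herm by (intro eq_matI) auto
  then have "adj (mexp X) * mexp X = 1\<^sub>m d"
    using mexp_uminus_mult[OF X] adj_mexp[OF X] by simp
  then show ?thesis
    unfolding X_def[symmetric] using X by (intro unitary_matI) auto
qed

lemma adj_herm_part: "A \<in> carrier_mat d d \<Longrightarrow> adj (herm_part A) = herm_part A"
  by (intro eq_matI) (auto simp: herm_part_def add.commute)

lemma adj_antiherm_part: "A \<in> carrier_mat d d \<Longrightarrow> adj (antiherm_part A) = antiherm_part A"
  by (intro eq_matI) (auto simp: antiherm_part_def right_diff_distrib)

lemma herm_part_carrier_mat: "A \<in> carrier_mat d d \<Longrightarrow> herm_part A \<in> carrier_mat d d"
  unfolding herm_part_def by (intro carrier_matI) auto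

lemma antiherm_part_carrier_mat: "A \<in> carrier_mat d d \<Longrightarrow> antiherm_part A \<in> carrier_mat d d"
  unfolding antiherm_part_def by (intro carrier_matI) auto

lemma evol_carrier_mat: "A \<in> carrier_mat d d \<Longrightarrow> evol A t k \<in> carrier_mat d d"
  unfolding evol_def by (intro carrier_matI) (auto simp: herm_part_def antiherm_part_def)

lemma unitary_evol:
  assumes A: "A \<in> carrier_mat d d"
  shows "unitary_mat (evol A t k)"
proof -
  define K where "K = complex_of_real k \<cdot>\<^sub>m herm_part A + antiherm_part A"
  have L: "herm_part A \<in> carrier_mat d d" and H: "antiherm_part A \<in> carrier_mat d d"
    using A by (auto intro: herm_part_carrier_mat antiherm_part_carrier_mat)
  then have K: "K \<in> carrier_mat d d" by (simp add: K_def)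
  have "adj K = adj (complex_of_real k \<cdot>\<^sub>m herm_part A) + adj (antiherm_part A)"
    unfolding K_def using L H by (intro adj_add) auto
  also have "\<dots> = K"
    by (simp add: K_def adj_smult adj_herm_part[OF A] adj_antiherm_part[OF A])
  finally show ?thesis
    unfolding evol_def K_def[symmetric] by (rule unitary_mexp_hermitian[OF K])
qed

subsection \<open>The Euclidean norm\<close>

lemma vnorm_L2_set: "vnorm v = L2_set (\<lambda>i. cmod (v $ i)) {..<dim_vec v}"
  by (simp add: vnorm_def L2_set_def)

lemma vnorm_nonneg [simp]: "0 \<le> vnorm v"
  by (simp add: vnorm_def sum_nonneg)

lemma vnorm_sq: "(vnorm v)\<^sup>2 = (\<Sum>i<dim_vec v. (cmod (v $ i))\<^sup>2)"
  by (simp add: vnorm_def sum_nonneg)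

lemma cmod_index_le_vnorm: "i < dim_vec v \<Longrightarrow> cmod (v $ i) \<le> vnorm v"
  unfolding vnorm_L2_set by (rule member_le_L2_set) auto

lemma vnorm_smult [simp]: "vnorm (a \<cdot>\<^sub>v v) = cmod a * vnorm v"
proof -
  have "vnorm (a \<cdot>\<^sub>v v) = L2_set (\<lambda>i. cmod a * cmod (v $ i)) {..<dim_vec v}"
    unfolding vnorm_L2_set by (intro L2_set_cong) (auto simp: norm_mult)
  then show ?thesis by (simp add: L2_set_right_distrib vnorm_L2_set)
qed

lemma vnorm_zero [simp]: "vnorm (0\<^sub>v n) = 0"
  by (simp add: vnorm_def)

lemma vnorm_add_le:
  assumes "dim_vec u = dim_vec v"
  shows "vnorm (u + v) \<le> vnorm u + vnorm v"
proof -
  have "vnorm (u + v) \<le> L2_set (\<lambda>i. cmod (u $ i) + cmod (v $ i)) {..<dim_vec v}"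
    unfolding vnorm_L2_set index_add_vec(2) using assms
    by (intro L2_set_mono) (auto intro: norm_triangle_ineq)
  also have "\<dots> \<le> vnorm u + vnorm v"
    unfolding vnorm_L2_set assms by (rule L2_set_triangle_ineq)
  finally show ?thesis .
qed

lemma vnorm_diff_triangle:
  assumes "dim_vec v = dim_vec u" "dim_vec w = dim_vec u"
  shows "vnorm (u - w) \<le> vnorm (u - v) + vnorm (v - w)"
proof -
  have "u - w = (u - v) + (v - w)"
    using assms by (intro eq_vecI) auto
  then show ?thesis
    using vnorm_add_le[of "u - v" "v - w"] assms by simp
qed

lemma vnorm_add_smult_le:
  assumes "dim_vec v = dim_vec u" "dim_vec w = dim_vec u"
  shows "vnorm (u + (a \<cdot>\<^sub>v v + b \<cdot>\<^sub>v w)) \<le> vnorm u + cmod a * vnorm v + cmod b * vnorm w"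
  using vnorm_add_le[of u "a \<cdot>\<^sub>v v + b \<cdot>\<^sub>v w"] vnorm_add_le[of "a \<cdot>\<^sub>v v" "b \<cdot>\<^sub>v w"] assms by simp

lemma vnorm_sum_le:
  assumes "finite J"
  shows "vnorm (vec D (\<lambda>i. \<Sum>j\<in>J. f j i)) \<le> (\<Sum>j\<in>J. vnorm (vec D (f j)))"
  using assms
proof (induction J rule: finite_induct)
  case (insert j J)
  have "vec D (\<lambda>i. \<Sum>j\<in>insert j J. f j i) = vec D (f j) + vec D (\<lambda>i. \<Sum>j\<in>J. f j i)"
    using insert by (intro eq_vecI) auto
  then show ?case
    using insert vnorm_add_le[of "vec D (f j)" "vec D (\<lambda>i. \<Sum>j\<in>J. f j i)"] by simp
qed (simp add: vnorm_def)

lemma vnorm_unit_vec: "i < d \<Longrightarrow> vnorm (unit_vec d i) = 1"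
  by (simp add: vnorm_def unit_vec_def if_distrib[of "\<lambda>x. (cmod x)\<^sup>2"] cong: if_cong)

lemma sum_cmod_mult_le_vnorm:
  assumes "M \<le> dim_vec x" "M \<le> dim_vec y"
  shows "(\<Sum>j<M. cmod (x $ j) * cmod (y $ j)) \<le> vnorm x * vnorm y"
proof -
  have restrict: "L2_set (\<lambda>j. cmod (v $ j)) {..<M} \<le> vnorm v" if "M \<le> dim_vec v" for v
    unfolding vnorm_L2_set L2_set_def using that by (intro real_sqrt_le_mono sum_mono2) auto
  have "(\<Sum>j<M. cmod (x $ j) * cmod (y $ j))
      \<le> L2_set (\<lambda>j. cmod (x $ j)) {..<M} * L2_set (\<lambda>j. cmod (y $ j)) {..<M}"
    using L2_set_mult_ineq[where f = "\<lambda>j. cmod (x $ j)" and g = "\<lambda>j. cmod (y $ j)" and A = "{..<M}"]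
    by simp
  also have "\<dots> \<le> vnorm x * vnorm y"
    using assms by (intro mult_mono restrict) auto
  finally show ?thesis .
qed

lemma vnorm_unitary:
  assumes U: "U \<in> carrier_mat d d" "unitary_mat U" and w: "w \<in> carrier_vec d"
  shows "vnorm (U *\<^sub>v w) = vnorm w"
proof -
  have orth: "(\<Sum>i<d. cnj (U $$ (i, f)) * U $$ (i, e)) = (if f = e then 1 else 0)"
    if "f < d" "e < d" for e f
  proof -
    have "(adj U * U) $$ (f, e) = (\<Sum>i<d. cnj (U $$ (i, f)) * U $$ (i, e))"
      using U that by (simp add: index_mult_mat_sum del: index_mult_mat(1))
    then show ?thesis using U that by (simp add: unitary_matD del: index_mult_mat(1))
  qed
  have "complex_of_real ((vnorm (U *\<^sub>v w))\<^sup>2) = (\<Sum>i<d. (U *\<^sub>v w) $ i * cnj ((U *\<^sub>v w) $ i))"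
    using U by (simp only: vnorm_sq of_real_sum complex_norm_square) simp
  also have "\<dots> = (\<Sum>i<d. (\<Sum>e<d. U $$ (i, e) * w $ e) * (\<Sum>f<d. cnj (U $$ (i, f)) * cnj (w $ f)))"
    using U w by (simp add: index_mult_mat_vec_sum del: index_mult_mat_vec)
  also have "\<dots> = (\<Sum>i<d. \<Sum>e<d. \<Sum>f<d. w $ e * cnj (w $ f) * (cnj (U $$ (i, f)) * U $$ (i, e)))"
    by (simp add: sum_product mult_ac)
  also have "\<dots> = (\<Sum>e<d. \<Sum>f<d. \<Sum>i<d. w $ e * cnj (w $ f) * (cnj (U $$ (i, f)) * U $$ (i, e)))"
    by (subst sum.swap) (rule sum.cong[OF refl], rule sum.swap)
  also have "\<dots> = (\<Sum>e<d. \<Sum>f<d. w $ e * cnj (w $ f) * (\<Sum>i<d. cnj (U $$ (i, f)) * U $$ (i, e)))"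
    by (simp add: sum_distrib_left)
  also have "\<dots> = (\<Sum>e<d. w $ e * cnj (w $ e))"
    by (simp add: orth if_distrib cong: if_cong)
  also have "\<dots> = complex_of_real ((vnorm w)\<^sup>2)"
    using w by (simp only: vnorm_sq of_real_sum complex_norm_square) simp
  finally show ?thesis
    using of_real_eq_iff power2_eq_imp_eq vnorm_nonneg by metis
qed

lemma bdd_above_opnorm_set:
  "bdd_above {vnorm (B *\<^sub>v v) | v. v \<in> carrier_vec (dim_col B) \<and> vnorm v \<le> 1}"
proof (rule bdd_aboveI, safe)
  fix v :: "complex vec" assume v: "v \<in> carrier_vec (dim_col B)" "vnorm v \<le> 1"
  have "vnorm (B *\<^sub>v v) \<le> (\<Sum>i<dim_row B. cmod ((B *\<^sub>v v) $ i))"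
    using L2_set_le_sum_abs[of "\<lambda>i. cmod ((B *\<^sub>v v) $ i)" "{..<dim_row B}"]
    by (simp add: vnorm_L2_set)
  also have "\<dots> \<le> (\<Sum>i<dim_row B. \<Sum>j<dim_col B. cmod (B $$ (i, j)))"
  proof (rule sum_mono)
    fix i assume "i \<in> {..<dim_row B}"
    then have "cmod ((B *\<^sub>v v) $ i) \<le> (\<Sum>j<dim_col B. cmod (B $$ (i, j)) * cmod (v $ j))"
      using v by (auto simp: index_mult_mat_vec_sum norm_mult intro: order_trans[OF norm_sum]
          simp del: index_mult_mat_vec)
    also have "\<dots> \<le> (\<Sum>j<dim_col B. cmod (B $$ (i, j)))"
      using v cmod_index_le_vnorm[of _ v]
      by (intro sum_mono mult_right_le_one_le) fastforce+
    finally show "cmod ((B *\<^sub>v v) $ i) \<le> (\<Sum>j<dim_col B. cmod (B $$ (i, j)))" .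
  qed
  finally show "vnorm (B *\<^sub>v v) \<le> (\<Sum>i<dim_row B. \<Sum>j<dim_col B. cmod (B $$ (i, j)))" .
qed

lemma vnorm_mult_vec_le_opnorm:
  assumes z: "dim_vec z = dim_col B"
  shows "vnorm (B *\<^sub>v z) \<le> opnorm B * vnorm z"
proof (cases "vnorm z = 0")
  case True
  then have "z = 0\<^sub>v (dim_col B)"
    using z cmod_index_le_vnorm[of _ z] by (intro eq_vecI) force+
  then have "B *\<^sub>v z = 0\<^sub>v (dim_row B)"
    using carrier_matI[of B "dim_row B" "dim_col B"] by auto
  then show ?thesis using True by simp
next
  case False
  then have pos: "0 < vnorm z" using vnorm_nonneg[of z] by linarith
  have zc: "z \<in> carrier_vec (dim_col B)" using z by (rule carrier_vecI)
  define v where "v = complex_of_real (1 / vnorm z) \<cdot>\<^sub>v z"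
  have "v \<in> carrier_vec (dim_col B)" "vnorm v \<le> 1"
    using pos zc by (auto simp: v_def norm_divide)
  then have "vnorm (B *\<^sub>v v) \<le> opnorm B"
    unfolding opnorm_def by (intro cSup_upper[OF _ bdd_above_opnorm_set]) blast
  moreover have "B *\<^sub>v v = complex_of_real (1 / vnorm z) \<cdot>\<^sub>v (B *\<^sub>v z)"
    unfolding v_def using zc by (intro mult_mat_vec[of _ "dim_row B" "dim_col B"]) auto
  ultimately show ?thesis
    using pos by (simp add: norm_divide field_simps)
qed

subsection \<open>Tensor products\<close>

definition vkron :: "complex vec \<Rightarrow> complex vec \<Rightarrow> complex vec" where
  "vkron x y = vec (dim_vec x * dim_vec y) (\<lambda>l. x $ (l div dim_vec y) * y $ (l mod dim_vec y))"

lemma dim_vkron [simp]: "dim_vec (vkron x y) = dim_vec x * dim_vec y"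
  by (simp add: vkron_def)

lemma vkron_carrier_vec [simp]:
  "x \<in> carrier_vec n \<Longrightarrow> y \<in> carrier_vec m \<Longrightarrow> vkron x y \<in> carrier_vec (n * m)"
  by (metis carrier_vecD carrier_vecI dim_vkron)

lemma index_vkron:
  assumes "x \<in> carrier_vec n" "y \<in> carrier_vec m" "a < n" "b < m"
  shows "vkron x y $ (a * m + b) = x $ a * y $ b"
  using assms by (simp add: vkron_def mult_add_less_mult mult_add_div_mod)

lemma vkron_assoc: "vkron (vkron x y) z = vkron x (vkron y z)"
proof (rule eq_vecI)
  fix l assume "l < dim_vec (vkron x (vkron y z))"
  then have l: "l < dim_vec x * (dim_vec y * dim_vec z)" by simp
  then have "0 < dim_vec y * dim_vec z" by (cases "dim_vec y * dim_vec z") auto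
  then have "0 < dim_vec z" by simp
  have split: "l mod (dim_vec y * dim_vec z) = l div dim_vec z mod dim_vec y * dim_vec z + l mod dim_vec z"
    by (metis mod_mult2_eq mult.commute)
  have "l div dim_vec z < dim_vec x * dim_vec y"
    using l by (simp add: less_mult_imp_div_less mult.assoc)
  moreover have "l mod (dim_vec y * dim_vec z) < dim_vec y * dim_vec z"
    using \<open>0 < dim_vec y * dim_vec z\<close> by simp
  moreover have "l div (dim_vec y * dim_vec z) = l div dim_vec z div dim_vec y"
    by (metis div_mult2_eq mult.commute)
  moreover have "l mod (dim_vec y * dim_vec z) div dim_vec z = l div dim_vec z mod dim_vec y"
    "l mod (dim_vec y * dim_vec z) mod dim_vec z = l mod dim_vec z"
    unfolding split using mult_add_div_mod[OF mod_less_divisor[OF \<open>0 < dim_vec z\<close>]] by simp_all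
  ultimately show "vkron (vkron x y) z $ l = vkron x (vkron y z) $ l"
    using l by (simp add: vkron_def)
qed simp

lemma unit_vec_mult_vkron: "unit_vec (a * b) 0 = vkron (unit_vec a 0) (unit_vec b 0)"
proof (rule eq_vecI)
  fix l assume "l < dim_vec (vkron (unit_vec a 0) (unit_vec b 0))"
  then have l: "l < a * b" by simp
  then have "0 < b" by (cases b) auto
  then have "l = 0 \<longleftrightarrow> l div b = 0 \<and> l mod b = 0"
    by (metis div_mult_mod_eq mult_0_right add_0 div_0 mod_0)
  then show "unit_vec (a * b) 0 $ l = vkron (unit_vec a 0) (unit_vec b 0) $ l"
    using l \<open>0 < b\<close> by (simp add: vkron_def unit_vec_def less_mult_imp_div_less)
qed simp

lemma vnorm_vkron: "vnorm (vkron x y) = vnorm x * vnorm y"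
proof -
  have "(\<Sum>l<dim_vec x * dim_vec y. (cmod (vkron x y $ l))\<^sup>2)
      = (\<Sum>a<dim_vec x. \<Sum>b<dim_vec y. (cmod (x $ a))\<^sup>2 * (cmod (y $ b))\<^sup>2)"
    unfolding sum_lessThan_mult_split
    by (intro sum.cong refl)
      (simp add: index_vkron[OF carrier_vecI carrier_vecI] norm_mult power_mult_distrib)
  also have "\<dots> = (\<Sum>a<dim_vec x. (cmod (x $ a))\<^sup>2) * (\<Sum>b<dim_vec y. (cmod (y $ b))\<^sup>2)"
    by (simp add: sum_product)
  finally show ?thesis
    by (simp add: vnorm_def real_sqrt_mult)
qed

lemma kron_dims [simp]:
  "dim_row (kron A B) = dim_row A * dim_row B" "dim_col (kron A B) = dim_col A * dim_col B"
  by (simp_all add: kron_def)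

lemma kron_carrier_mat [simp]:
  "A \<in> carrier_mat a a' \<Longrightarrow> B \<in> carrier_mat b b' \<Longrightarrow> kron A B \<in> carrier_mat (a * b) (a' * b')"
  by (intro carrier_matI) auto

lemma index_kron:
  assumes "A \<in> carrier_mat a a'" "B \<in> carrier_mat b b'" "p < a" "q < a'" "r < b" "s < b'"
  shows "kron A B $$ (p * b + r, q * b' + s) = A $$ (p, q) * B $$ (r, s)"
  using assms by (simp add: kron_def mult_add_less_mult mult_add_div_mod)

lemma kron_mult_vec_index:
  assumes A: "A \<in> carrier_mat a a'" and B: "B \<in> carrier_mat b b'"
    and w: "w \<in> carrier_vec (a' * b')" and "p < a" "r < b"
  shows "(kron A B *\<^sub>v w) $ (p * b + r)
    = (\<Sum>p'<a'. \<Sum>r'<b'. A $$ (p, p') * B $$ (r, r') * w $ (p' * b' + r'))"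
proof -
  have "(kron A B *\<^sub>v w) $ (p * b + r) = (\<Sum>l<a' * b'. kron A B $$ (p * b + r, l) * w $ l)"
    using assms by (simp add: index_mult_mat_vec_sum mult_add_less_mult del: index_mult_mat_vec)
  then show ?thesis
    using assms by (simp add: sum_lessThan_mult_split index_kron)
qed

lemma kron_mult_vkron:
  assumes A: "A \<in> carrier_mat a a'" and B: "B \<in> carrier_mat b b'"
    and x: "x \<in> carrier_vec a'" and y: "y \<in> carrier_vec b'"
  shows "kron A B *\<^sub>v vkron x y = vkron (A *\<^sub>v x) (B *\<^sub>v y)"
proof (rule eq_vecI)
  fix l assume "l < dim_vec (vkron (A *\<^sub>v x) (B *\<^sub>v y))"
  then have "l < a * b" using A B by simp
  then obtain p r where pr: "l = p * b + r" "p < a" "r < b"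
    by (rule less_mult_index_cases)
  have "(kron A B *\<^sub>v vkron x y) $ l
      = (\<Sum>p'<a'. \<Sum>r'<b'. A $$ (p, p') * B $$ (r, r') * (x $ p' * y $ r'))"
    unfolding pr(1) using A B x y pr by (simp add: kron_mult_vec_index index_vkron)
  also have "\<dots> = (A *\<^sub>v x) $ p * (B *\<^sub>v y) $ r"
    using A B x y pr
    by (simp add: index_mult_mat_vec_sum sum_product mult_ac del: index_mult_mat_vec)
  also have "\<dots> = vkron (A *\<^sub>v x) (B *\<^sub>v y) $ l"
    unfolding pr(1) by (rule index_vkron[symmetric]) (use A B x y pr in auto)
  finally show "(kron A B *\<^sub>v vkron x y) $ l = vkron (A *\<^sub>v x) (B *\<^sub>v y) $ l" .
qed (use A B in simp)

lemma kron_mult: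
  assumes A: "A \<in> carrier_mat a a'" and C: "C \<in> carrier_mat a' a''"
    and B: "B \<in> carrier_mat b b'" and D: "D \<in> carrier_mat b' b''"
  shows "kron A B * kron C D = kron (A * C) (B * D)"
proof (rule eq_matI)
  fix i j assume "i < dim_row (kron (A * C) (B * D))" "j < dim_col (kron (A * C) (B * D))"
  then have i: "i < a * b" and j: "j < a'' * b''" using A B C D by auto
  obtain p r where pr: "i = p * b + r" "p < a" "r < b"
    using i by (rule less_mult_index_cases)
  obtain q s where qs: "j = q * b'' + s" "q < a''" "s < b''"
    using j by (rule less_mult_index_cases)
  note ij = pr(1) qs(1) pr(2,3) qs(2,3)
  have "(kron A B * kron C D) $$ (i, j) = (\<Sum>l<a' * b'. kron A B $$ (i, l) * kron C D $$ (l, j))"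
    using A B C D i j by (simp add: index_mult_mat_sum del: index_mult_mat(1))
  also have "\<dots> = (\<Sum>p'<a'. \<Sum>r'<b'. A $$ (p, p') * B $$ (r, r') * (C $$ (p', q) * D $$ (r', s)))"
    unfolding sum_lessThan_mult_split ij(1,2) using A B C D ij(3-) by (simp add: index_kron)
  also have "\<dots> = (A * C) $$ (p, q) * (B * D) $$ (r, s)"
    using A B C D ij by (simp add: index_mult_mat_sum sum_product mult_ac del: index_mult_mat(1))
  also have "\<dots> = kron (A * C) (B * D) $$ (i, j)"
    unfolding ij(1,2) by (rule index_kron[symmetric]) (use A B C D ij in auto)
  finally show "(kron A B * kron C D) $$ (i, j) = kron (A * C) (B * D) $$ (i, j)" .
qed (use A B C D in auto)

lemma adj_kron: "adj (kron A B) = kron (adj A) (adj B)"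
proof (rule eq_matI)
  fix i j assume "i < dim_row (kron (adj A) (adj B))" "j < dim_col (kron (adj A) (adj B))"
  then have i: "i < dim_col A * dim_col B" and j: "j < dim_row A * dim_row B" by auto
  then have "0 < dim_col B" "0 < dim_row B" by (cases "dim_col B", auto, cases "dim_row B", auto)
  then show "adj (kron A B) $$ (i, j) = kron (adj A) (adj B) $$ (i, j)"
    using i j by (simp add: kron_def less_mult_imp_div_less)
qed auto

lemma kron_one: "kron (1\<^sub>m a) (1\<^sub>m b) = 1\<^sub>m (a * b)"
proof (rule eq_matI)
  fix i j assume "i < dim_row (1\<^sub>m (a * b))" "j < dim_col (1\<^sub>m (a * b))"
  then have ij: "i < a * b" "j < a * b" by auto
  then have "0 < b" by (cases b) auto
  have "i = j \<longleftrightarrow> i div b = j div b \<and> i mod b = j mod b"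
    by (metis div_mult_mod_eq)
  then show "kron (1\<^sub>m a) (1\<^sub>m b) $$ (i, j) = 1\<^sub>m (a * b) $$ (i, j)"
    using ij \<open>0 < b\<close> by (simp add: kron_def less_mult_imp_div_less)
qed auto

lemma unitary_mat_kron:
  assumes A: "A \<in> carrier_mat a a" "unitary_mat A" and B: "B \<in> carrier_mat b b" "unitary_mat B"
  shows "unitary_mat (kron A B)"
proof (rule unitary_matI)
  show "kron A B \<in> carrier_mat (a * b) (a * b)" using A B by simp
  have "adj (kron A B) * kron A B = kron (adj A * A) (adj B * B)"
    unfolding adj_kron using A B by (intro kron_mult) auto
  also have "\<dots> = 1\<^sub>m (a * b)"
    using A B by (simp add: unitary_matD kron_one)
  finally show "adj (kron A B) * kron A B = 1\<^sub>m (a * b)" .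
qed

subsection \<open>Ancilla registers\<close>

lemma ket_dims [simp]: "dim_row (ket m j) = 2 ^ m" "dim_col (ket m j) = 1"
  by (simp_all add: ket_def)

lemma ket_carrier_mat [simp]: "ket m j \<in> carrier_mat (2 ^ m) 1"
  by (simp add: ket_def)

lemma ketbra_carrier_mat [simp]: "ketbra m j \<in> carrier_mat (2 ^ m) (2 ^ m)"
  unfolding ketbra_def by (rule mult_carrier_mat[OF ket_carrier_mat adj_carrier_mat[OF ket_carrier_mat]])

lemma index_ketbra:
  assumes "a < 2 ^ m" "b < 2 ^ m"
  shows "ketbra m j $$ (a, b) = (if a = j \<and> b = j then 1 else 0)"
  using assms by (simp add: ketbra_def ket_def index_mult_mat_sum del: index_mult_mat(1))

lemma bra0_I_dims [simp]: "dim_row (bra0_I m K) = K" "dim_col (bra0_I m K) = 2 ^ m * K"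
  by (simp_all add: bra0_I_def)

lemma bra0_I_carrier_mat [simp]: "bra0_I m K \<in> carrier_mat K (2 ^ m * K)"
  by (simp add: carrier_matI)

lemma ket0_I_carrier_mat [simp]: "ket0_I m K \<in> carrier_mat (2 ^ m * K) K"
  using kron_carrier_mat[OF ket_carrier_mat one_carrier_mat, of m 0 K] by (simp add: ket0_I_def)

lemma bra0_I_mult_vec:
  assumes w: "w \<in> carrier_vec (2 ^ m * K)"
  shows "bra0_I m K *\<^sub>v w = vec K (\<lambda>i. w $ i)"
proof (rule eq_vecI)
  fix i assume "i < dim_vec (vec K (\<lambda>i. w $ i))"
  then have i: "i < K" by simp
  have "(bra0_I m K *\<^sub>v w) $ (0 * K + i) = (\<Sum>p<2 ^ m. \<Sum>r<K.
      adj (ket m 0) $$ (0, p) * 1\<^sub>m K $$ (i, r) * w $ (p * K + r))"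
    unfolding bra0_I_def using w i
    by (intro kron_mult_vec_index[OF adj_carrier_mat[OF ket_carrier_mat]]) auto
  also have "\<dots> = (\<Sum>p::nat<2 ^ m. if p = 0 then w $ i else 0)"
    using i by (intro sum.cong refl) (simp add: ket_def if_distrib[of "\<lambda>x. x * _"] cong: if_cong)
  also have "\<dots> = w $ i" by simp
  finally show "(bra0_I m K *\<^sub>v w) $ i = vec K (\<lambda>i. w $ i) $ i"
    using i by simp
qed simp

lemma index_bra0_I_mult_vec: "w \<in> carrier_vec (2 ^ m * K) \<Longrightarrow> i < K \<Longrightarrow> (bra0_I m K *\<^sub>v w) $ i = w $ i"
  by (simp add: bra0_I_mult_vec)

lemma ket0_I_mult_vec:
  assumes z: "z \<in> carrier_vec K"
  shows "ket0_I m K *\<^sub>v z = vkron (unit_vec (2 ^ m) 0) z"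
proof (rule eq_vecI)
  fix l assume "l < dim_vec (vkron (unit_vec (2 ^ m) 0) z)"
  then have "l < 2 ^ m * K" using z by simp
  then obtain p r where pr: "l = p * K + r" "p < 2 ^ m" "r < K"
    by (rule less_mult_index_cases)
  have "(ket0_I m K *\<^sub>v z) $ (p * K + r)
      = (\<Sum>p'<1. \<Sum>r'<K. ket m 0 $$ (p, p') * 1\<^sub>m K $$ (r, r') * z $ (p' * K + r'))"
    unfolding ket0_I_def using z pr by (intro kron_mult_vec_index[OF ket_carrier_mat]) auto
  also have "\<dots> = vkron (unit_vec (2 ^ m) 0) z $ (p * K + r)"
    unfolding index_vkron[OF unit_vec_carrier z pr(2,3)] using pr
    by (cases "p = 0") (simp_all add: ket_def if_distrib[of "\<lambda>x. x * _"] cong: if_cong)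
  finally show "(ket0_I m K *\<^sub>v z) $ l = vkron (unit_vec (2 ^ m) 0) z $ l"
    using pr by simp
qed (use z in \<open>simp add: ket0_I_def\<close>)

lemma bra0_I_mult_kron_one:
  assumes X: "X \<in> carrier_mat K K'" and w: "w \<in> carrier_vec (2 ^ m * K')"
  shows "bra0_I m K *\<^sub>v (kron (1\<^sub>m (2 ^ m)) X *\<^sub>v w) = X *\<^sub>v (bra0_I m K' *\<^sub>v w)"
proof (rule eq_vecI)
  fix i assume "i < dim_vec (X *\<^sub>v (bra0_I m K' *\<^sub>v w))"
  then have i: "i < K" using X by simp
  have "(kron (1\<^sub>m (2 ^ m)) X *\<^sub>v w) $ (0 * K + i)
      = (\<Sum>p<2 ^ m. \<Sum>r<K'. 1\<^sub>m (2 ^ m) $$ (0, p) * X $$ (i, r) * w $ (p * K' + r))"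
    using X w i by (intro kron_mult_vec_index) auto
  also have "\<dots> = (\<Sum>p::nat<2 ^ m. if p = 0 then (\<Sum>r<K'. X $$ (i, r) * w $ r) else 0)"
    by (intro sum.cong refl) auto
  also have "\<dots> = (\<Sum>r<K'. X $$ (i, r) * w $ r)"
    by simp
  also have "\<dots> = (X *\<^sub>v (bra0_I m K' *\<^sub>v w)) $ i"
    using X w i by (simp add: bra0_I_mult_vec index_mult_mat_vec_sum del: index_mult_mat_vec)
  finally show "(bra0_I m K *\<^sub>v (kron (1\<^sub>m (2 ^ m)) X *\<^sub>v w)) $ i = (X *\<^sub>v (bra0_I m K' *\<^sub>v w)) $ i"
    using index_bra0_I_mult_vec[OF mult_mat_vec_carrier[OF kron_carrier_mat[OF one_carrier_mat X] w] i]
    by (simp del: index_mult_mat_vec)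
qed (use X in simp)

lemma bra0_I_add_mult_vec:
  assumes "w \<in> carrier_vec (2 ^ b * (2 ^ a * D))"
  shows "bra0_I (a + b) D *\<^sub>v w = bra0_I a D *\<^sub>v (bra0_I b (2 ^ a * D) *\<^sub>v w)"
proof (rule eq_vecI)
  fix i assume "i < dim_vec (bra0_I a D *\<^sub>v (bra0_I b (2 ^ a * D) *\<^sub>v w))"
  then have "i < D" "i < 2 ^ a * D" by (simp_all add: less_le_trans[of i D])
  then show "(bra0_I (a + b) D *\<^sub>v w) $ i = (bra0_I a D *\<^sub>v (bra0_I b (2 ^ a * D) *\<^sub>v w)) $ i"
    using assms by (simp add: bra0_I_mult_vec power_add mult_ac)
qed simp

lemma top_left_block_mult_vec:
  assumes U: "U \<in> carrier_mat (2 ^ m * K) (2 ^ m * K)" and z: "z \<in> carrier_vec K"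
  shows "(bra0_I m K * U * ket0_I m K) *\<^sub>v z = bra0_I m K *\<^sub>v (U *\<^sub>v (ket0_I m K *\<^sub>v z))"
proof -
  have "(bra0_I m K * U * ket0_I m K) *\<^sub>v z = (bra0_I m K * U) *\<^sub>v (ket0_I m K *\<^sub>v z)"
    by (rule assoc_mult_mat_vec[OF mult_carrier_mat[OF bra0_I_carrier_mat U] ket0_I_carrier_mat z])
  also have "\<dots> = bra0_I m K *\<^sub>v (U *\<^sub>v (ket0_I m K *\<^sub>v z))"
    by (rule assoc_mult_mat_vec[OF bra0_I_carrier_mat U mult_mat_vec_carrier[OF ket0_I_carrier_mat z]])
  finally show ?thesis .
qed

text \<open>\<open>partial_inner x D z = (<x| (x) I_D) z\<close>.\<close>

definition partial_inner :: "complex vec \<Rightarrow> nat \<Rightarrow> complex vec \<Rightarrow> complex vec" where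
  "partial_inner x D z = vec D (\<lambda>i. \<Sum>c<dim_vec x. cnj (x $ c) * z $ (c * D + i))"

lemma bra0_I_mult_kron_adj:
  assumes P: "P \<in> carrier_mat (2 ^ m) (2 ^ m)" and z: "z \<in> carrier_vec (2 ^ m * D)"
  shows "bra0_I m D *\<^sub>v (kron (adj P) (1\<^sub>m D) *\<^sub>v z) = partial_inner (P *\<^sub>v ket0v m) D z"
proof (rule eq_vecI)
  fix i assume "i < dim_vec (partial_inner (P *\<^sub>v ket0v m) D z)"
  then have i: "i < D" by (simp add: partial_inner_def)
  have "(kron (adj P) (1\<^sub>m D) *\<^sub>v z) $ (0 * D + i)
      = (\<Sum>c<2 ^ m. \<Sum>e<D. adj P $$ (0, c) * 1\<^sub>m D $$ (i, e) * z $ (c * D + e))"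
    using P z i by (intro kron_mult_vec_index) auto
  also have "\<dots> = (\<Sum>c<2 ^ m. cnj (P $$ (c, 0)) * z $ (c * D + i))"
    using P i by (intro sum.cong refl) (simp add: if_distrib[of "\<lambda>x. _ * x * _"] cong: if_cong)
  also have "\<dots> = partial_inner (P *\<^sub>v ket0v m) D z $ i"
    using P i by (simp add: partial_inner_def ket0v_def)
  finally show "(bra0_I m D *\<^sub>v (kron (adj P) (1\<^sub>m D) *\<^sub>v z)) $ i = partial_inner (P *\<^sub>v ket0v m) D z $ i"
    using index_bra0_I_mult_vec[OF mult_mat_vec_carrier[OF
        kron_carrier_mat[OF adj_carrier_mat[OF P] one_carrier_mat] z] i]
    by (simp del: index_mult_mat_vec)
qed (simp add: partial_inner_def)

lemma partial_inner_minus: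
  assumes "x \<in> carrier_vec C" "z \<in> carrier_vec (C * D)" "z' \<in> carrier_vec (C * D)"
  shows "partial_inner x D (z - z') = partial_inner x D z - partial_inner x D z'"
  using assms
  by (intro eq_vecI) (auto simp: partial_inner_def mult_add_less_mult right_diff_distrib sum_subtractf)

lemma vnorm_partial_inner_le:
  assumes x: "x \<in> carrier_vec C" and z: "z \<in> carrier_vec (C * D)"
  shows "vnorm (partial_inner x D z) \<le> vnorm x * vnorm z"
proof -
  let ?C = "dim_vec x"
  have z: "z \<in> carrier_vec (?C * D)" using x z by simp
  let ?col = "\<lambda>i. L2_set (\<lambda>c. cmod (z $ (c * D + i))) {..<?C}"
  have "vnorm (partial_inner x D z) = L2_set (\<lambda>i. cmod (\<Sum>c<?C. cnj (x $ c) * z $ (c * D + i))) {..<D}"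
    unfolding vnorm_L2_set partial_inner_def by (intro L2_set_cong) auto
  also have "\<dots> \<le> L2_set (\<lambda>i. vnorm x * ?col i) {..<D}"
  proof (rule L2_set_mono)
    fix i
    have "cmod (\<Sum>c<?C. cnj (x $ c) * z $ (c * D + i))
        \<le> (\<Sum>c<?C. \<bar>cmod (x $ c)\<bar> * \<bar>cmod (z $ (c * D + i))\<bar>)"
      by (rule order_trans[OF norm_sum]) (simp add: norm_mult)
    also have "\<dots> \<le> vnorm x * ?col i"
      unfolding vnorm_L2_set by (rule L2_set_mult_ineq)
    finally show "cmod (\<Sum>c<?C. cnj (x $ c) * z $ (c * D + i)) \<le> vnorm x * ?col i" .
  qed simp
  also have "\<dots> = vnorm x * L2_set ?col {..<D}"
    by (simp add: L2_set_right_distrib)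
  also have "L2_set ?col {..<D} = vnorm z"
  proof -
    have "(\<Sum>i<D. (?col i)\<^sup>2) = (\<Sum>i<D. \<Sum>c<?C. (cmod (z $ (c * D + i)))\<^sup>2)"
      by (simp add: L2_set_def sum_nonneg)
    also have "\<dots> = (\<Sum>l<?C * D. (cmod (z $ l))\<^sup>2)"
      by (subst sum.swap) (simp add: sum_lessThan_mult_split)
    finally show ?thesis
      using z by (simp add: L2_set_def vnorm_def)
  qed
  finally show ?thesis .
qed

subsection \<open>Linear combinations of unitaries\<close>

definition lcu_mat :: "nat \<Rightarrow> nat \<Rightarrow> (nat \<Rightarrow> complex) \<Rightarrow> (nat \<Rightarrow> complex mat) \<Rightarrow> complex mat" where
  "lcu_mat D M a E = foldr (\<lambda>j acc. a j \<cdot>\<^sub>m E j + acc) [0..<M] (0\<^sub>m D D)"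

definition select_mat :: "nat \<Rightarrow> nat \<Rightarrow> nat \<Rightarrow> (nat \<Rightarrow> complex mat) \<Rightarrow> complex mat" where
  "select_mat m D M E = foldr (\<lambda>j acc. kron (ketbra m j) (E j) + acc) [0..<M] (0\<^sub>m (2 ^ m * D) (2 ^ m * D))"

lemma LCU_eq_lcu_mat: "LCU A t k c n = lcu_mat (2 ^ n) (dim_vec c) (\<lambda>j. c $ j) (\<lambda>j. evol A t (k j))"
  by (simp add: LCU_def lcu_mat_def)

lemma Qmat_eq_select_mat: "Qmat A t k M mc n = select_mat mc (2 ^ n) M (\<lambda>j. evol A t (k j))"
  by (simp add: Qmat_def select_mat_def)

lemma foldr_add_mat_dims:
  "dim_row (foldr (\<lambda>j acc. X j + acc) js Z) = dim_row Z"
  "dim_col (foldr (\<lambda>j acc. X j + acc) js Z) = dim_col Z"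
  by (induction js) auto

lemma index_foldr_add_mat:
  fixes X :: "nat \<Rightarrow> complex mat"
  assumes "r < dim_row Z" "s < dim_col Z"
  shows "foldr (\<lambda>j acc. X j + acc) js Z $$ (r, s) = (\<Sum>j\<leftarrow>js. X j $$ (r, s)) + Z $$ (r, s)"
  using assms by (induction js) (auto simp: foldr_add_mat_dims add.assoc)

lemma lcu_mat_dims [simp]: "dim_row (lcu_mat D M a E) = D" "dim_col (lcu_mat D M a E) = D"
  by (simp_all add: lcu_mat_def foldr_add_mat_dims)

lemma select_mat_dims [simp]:
  "dim_row (select_mat m D M E) = 2 ^ m * D" "dim_col (select_mat m D M E) = 2 ^ m * D"
  by (simp_all add: select_mat_def foldr_add_mat_dims)

lemma lcu_mat_carrier_mat [simp]: "lcu_mat D M a E \<in> carrier_mat D D"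
  by (rule carrier_matI) simp_all

lemma select_mat_carrier_mat [simp]: "select_mat m D M E \<in> carrier_mat (2 ^ m * D) (2 ^ m * D)"
  by (rule carrier_matI) simp_all

lemma index_lcu_mat:
  assumes E: "\<And>j. j < M \<Longrightarrow> E j \<in> carrier_mat D D" and "i < D" "e < D"
  shows "lcu_mat D M a E $$ (i, e) = (\<Sum>j<M. a j * E j $$ (i, e))"
proof -
  have "lcu_mat D M a E $$ (i, e) = (\<Sum>j<M. (a j \<cdot>\<^sub>m E j) $$ (i, e))"
    using assms by (simp add: lcu_mat_def index_foldr_add_mat sum_list_distinct_conv_sum_set
        atLeast0LessThan)
  also have "\<dots> = (\<Sum>j<M. a j * E j $$ (i, e))"
  proof (rule sum.cong[OF refl])
    fix j assume "j \<in> {..<M}"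
    then show "(a j \<cdot>\<^sub>m E j) $$ (i, e) = a j * E j $$ (i, e)"
      using carrier_matD[OF E[of j]] assms by simp
  qed
  finally show ?thesis .
qed

lemma index_lcu_mat_mult_vec:
  assumes E: "\<And>j. j < M \<Longrightarrow> E j \<in> carrier_mat D D" and w: "w \<in> carrier_vec D" and i: "i < D"
  shows "(lcu_mat D M a E *\<^sub>v w) $ i = (\<Sum>j<M. a j * (E j *\<^sub>v w) $ i)"
proof -
  have "(lcu_mat D M a E *\<^sub>v w) $ i = (\<Sum>e<D. lcu_mat D M a E $$ (i, e) * w $ e)"
    using w i by (simp add: index_mult_mat_vec_sum del: index_mult_mat_vec)
  also have "\<dots> = (\<Sum>e<D. \<Sum>j<M. a j * (E j $$ (i, e) * w $ e))"
    using E i by (simp add: index_lcu_mat sum_distrib_right mult.assoc)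
  also have "\<dots> = (\<Sum>j<M. a j * (E j *\<^sub>v w) $ i)"
  proof (subst sum.swap, rule sum.cong[OF refl])
    fix j assume "j \<in> {..<M}"
    then show "(\<Sum>e<D. a j * (E j $$ (i, e) * w $ e)) = a j * (E j *\<^sub>v w) $ i"
      using carrier_matD[OF E[of j]] w i
      by (simp add: index_mult_mat_vec_sum sum_distrib_left del: index_mult_mat_vec)
  qed
  finally show ?thesis .
qed

lemma vnorm_lcu_mat_mult_vec_le:
  assumes E: "\<And>j. j < M \<Longrightarrow> E j \<in> carrier_mat D D \<and> unitary_mat (E j)"
    and w: "w \<in> carrier_vec D"
  shows "vnorm (lcu_mat D M a E *\<^sub>v w) \<le> (\<Sum>j<M. cmod (a j)) * vnorm w"
proof -
  have "lcu_mat D M a E *\<^sub>v w = vec D (\<lambda>i. \<Sum>j<M. a j * (E j *\<^sub>v w) $ i)"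
    using E w by (intro eq_vecI) (simp_all add: index_lcu_mat_mult_vec del: index_mult_mat_vec)
  then have "vnorm (lcu_mat D M a E *\<^sub>v w) \<le> (\<Sum>j<M. vnorm (vec D (\<lambda>i. a j * (E j *\<^sub>v w) $ i)))"
    by (simp add: vnorm_sum_le)
  also have "\<dots> = (\<Sum>j<M. cmod (a j) * vnorm w)"
  proof (rule sum.cong[OF refl])
    fix j assume "j \<in> {..<M}"
    then have "vec D (\<lambda>i. a j * (E j *\<^sub>v w) $ i) = a j \<cdot>\<^sub>v (E j *\<^sub>v w)"
      "vnorm (E j *\<^sub>v w) = vnorm w"
      using E[of j] w by (auto intro!: eq_vecI vnorm_unitary)
    then show "vnorm (vec D (\<lambda>i. a j * (E j *\<^sub>v w) $ i)) = cmod (a j) * vnorm w" by simp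
  qed
  finally show ?thesis by (simp add: sum_distrib_right)
qed

lemma index_select_mat:
  assumes E: "\<And>j. j < M \<Longrightarrow> E j \<in> carrier_mat D D" and M: "M \<le> 2 ^ m"
    and "c < 2 ^ m" "i < D" "c' < 2 ^ m" "e < D"
  shows "select_mat m D M E $$ (c * D + i, c' * D + e) = (if c = c' \<and> c < M then E c $$ (i, e) else 0)"
proof -
  have "select_mat m D M E $$ (c * D + i, c' * D + e)
      = (\<Sum>j<M. kron (ketbra m j) (E j) $$ (c * D + i, c' * D + e))"
    using assms by (simp add: select_mat_def index_foldr_add_mat mult_add_less_mult
        sum_list_distinct_conv_sum_set atLeast0LessThan)
  also have "\<dots> = (\<Sum>j<M. if j = c then (if c = c' then E c $$ (i, e) else 0) else 0)"
  proof (rule sum.cong[OF refl])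
    fix j assume "j \<in> {..<M}"
    then have "E j \<in> carrier_mat D D" using E by simp
    then show "kron (ketbra m j) (E j) $$ (c * D + i, c' * D + e)
        = (if j = c then (if c = c' then E c $$ (i, e) else 0) else 0)"
      using assms by (simp add: index_kron[OF ketbra_carrier_mat] index_ketbra)
  qed
  also have "\<dots> = (if c = c' \<and> c < M then E c $$ (i, e) else 0)"
    by simp
  finally show ?thesis .
qed

lemma select_mat_mult_vkron_index:
  assumes E: "\<And>j. j < M \<Longrightarrow> E j \<in> carrier_mat D D" and M: "M \<le> 2 ^ m"
    and y: "y \<in> carrier_vec (2 ^ m)" and w: "w \<in> carrier_vec D" and c: "c < 2 ^ m" and i: "i < D"
  shows "(select_mat m D M E *\<^sub>v vkron y w) $ (c * D + i) = (if c < M then y $ c * (E c *\<^sub>v w) $ i else 0)"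
proof -
  have "(select_mat m D M E *\<^sub>v vkron y w) $ (c * D + i)
      = (\<Sum>l<2 ^ m * D. select_mat m D M E $$ (c * D + i, l) * vkron y w $ l)"
    using y w c i by (simp add: index_mult_mat_vec_sum mult_add_less_mult del: index_mult_mat_vec)
  also have "\<dots> = (\<Sum>c'<2 ^ m. \<Sum>e<D. select_mat m D M E $$ (c * D + i, c' * D + e) * (y $ c' * w $ e))"
    unfolding sum_lessThan_mult_split using y w by (simp add: index_vkron)
  also have "\<dots> = (\<Sum>c'<2 ^ m. if c' = c \<and> c < M then (\<Sum>e<D. E c $$ (i, e) * (y $ c * w $ e)) else 0)"
    using assms by (intro sum.cong refl) (auto simp: index_select_mat)
  also have "\<dots> = (if c < M then y $ c * (E c *\<^sub>v w) $ i else 0)"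
    using E[of c] w c i
    by (cases "c < M") (simp_all add: index_mult_mat_vec_sum sum_distrib_left mult_ac
        del: index_mult_mat_vec)
  finally show ?thesis .
qed

lemma partial_inner_select_mat:
  assumes E: "\<And>j. j < M \<Longrightarrow> E j \<in> carrier_mat D D" and M: "M \<le> 2 ^ m"
    and x: "x \<in> carrier_vec (2 ^ m)" and y: "y \<in> carrier_vec (2 ^ m)" and w: "w \<in> carrier_vec D"
  shows "partial_inner x D (select_mat m D M E *\<^sub>v vkron y w) = lcu_mat D M (\<lambda>j. cnj (x $ j) * y $ j) E *\<^sub>v w"
proof (rule eq_vecI)
  fix i assume "i < dim_vec (lcu_mat D M (\<lambda>j. cnj (x $ j) * y $ j) E *\<^sub>v w)"
  then have i: "i < D" by (simp del: lcu_mat_dims) simp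
  have "partial_inner x D (select_mat m D M E *\<^sub>v vkron y w) $ i
      = (\<Sum>c<2 ^ m. cnj (x $ c) * (if c < M then y $ c * (E c *\<^sub>v w) $ i else 0))"
    using assms i by (simp add: partial_inner_def select_mat_mult_vkron_index)
  also have "\<dots> = (\<Sum>c<2 ^ m. if c < M then cnj (x $ c) * y $ c * (E c *\<^sub>v w) $ i else 0)"
    by (intro sum.cong refl) simp
  also have "\<dots> = (\<Sum>c<M. cnj (x $ c) * y $ c * (E c *\<^sub>v w) $ i)"
  proof -
    have "{..<2 ^ m} \<inter> {c. c < M} = {..<M}" using M by auto
    then show ?thesis by (simp add: sum.If_cases)
  qed
  also have "\<dots> = (lcu_mat D M (\<lambda>j. cnj (x $ j) * y $ j) E *\<^sub>v w) $ i"
    using E w i by (simp add: index_lcu_mat_mult_vec del: index_mult_mat_vec)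
  finally show "partial_inner x D (select_mat m D M E *\<^sub>v vkron y w) $ i
      = (lcu_mat D M (\<lambda>j. cnj (x $ j) * y $ j) E *\<^sub>v w) $ i" .
qed (simp add: partial_inner_def)

text \<open>The three summands are the errors caused by the coefficients, by the initial state and by
  the block encoding of the select operator.\<close>

lemma lcu_postselection_decomposition:
  fixes E :: "nat \<Rightarrow> complex mat" and a :: "nat \<Rightarrow> complex" and \<gamma> \<nu> :: real
  assumes E: "\<And>j. j < M \<Longrightarrow> E j \<in> carrier_mat D D" and M: "M \<le> 2 ^ m"
    and x: "x \<in> carrier_vec (2 ^ m)" and y: "y \<in> carrier_vec (2 ^ m)"
    and u: "u \<in> carrier_vec D" and v: "v \<in> carrier_vec D"
    and B: "B \<in> carrier_mat (2 ^ m * D) (2 ^ m * D)"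
  shows "lcu_mat D M a E *\<^sub>v u - complex_of_real (\<gamma> * \<nu>) \<cdot>\<^sub>v partial_inner x D (B *\<^sub>v vkron y v)
    = lcu_mat D M (\<lambda>j. a j - \<gamma> * (cnj (x $ j) * y $ j)) E *\<^sub>v u
      + (complex_of_real \<gamma> \<cdot>\<^sub>v (lcu_mat D M (\<lambda>j. cnj (x $ j) * y $ j) E *\<^sub>v (u - complex_of_real \<nu> \<cdot>\<^sub>v v))
      + complex_of_real (- \<gamma> * \<nu>) \<cdot>\<^sub>v partial_inner x D ((B - select_mat m D M E) *\<^sub>v vkron y v))"
    (is "_ = ?T1 + (_ \<cdot>\<^sub>v ?T2 + _ \<cdot>\<^sub>v ?T3)")
proof -
  define S L where "S = select_mat m D M E" and "L = lcu_mat D M (\<lambda>j. cnj (x $ j) * y $ j) E"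
  have S: "S \<in> carrier_mat (2 ^ m * D) (2 ^ m * D)" and L: "L \<in> carrier_mat D D"
    by (simp_all add: S_def L_def)
  have yv: "vkron y v \<in> carrier_vec (2 ^ m * D)" using y v by simp
  have T2: "?T2 = L *\<^sub>v u - complex_of_real \<nu> \<cdot>\<^sub>v (L *\<^sub>v v)"
    unfolding L_def[symmetric] using L u v by (simp add: mult_minus_distrib_mat_vec mult_mat_vec)
  have "(B - S) *\<^sub>v vkron y v = B *\<^sub>v vkron y v - S *\<^sub>v vkron y v"
    using B S yv by (simp add: minus_mult_distrib_mat_vec)
  then have T3: "?T3 = partial_inner x D (B *\<^sub>v vkron y v) - L *\<^sub>v v"
    using x y v E M partial_inner_minus[OF x mult_mat_vec_carrier[OF B yv] mult_mat_vec_carrier[OF S yv]]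
    unfolding L_def by (simp add: partial_inner_select_mat S_def)
  show ?thesis
  proof (rule eq_vecI)
    fix i assume "i < dim_vec (?T1 + (complex_of_real \<gamma> \<cdot>\<^sub>v ?T2 + complex_of_real (- \<gamma> * \<nu>) \<cdot>\<^sub>v ?T3))"
    then have i: "i < D" by (simp add: partial_inner_def)
    then show "(lcu_mat D M a E *\<^sub>v u - complex_of_real (\<gamma> * \<nu>) \<cdot>\<^sub>v partial_inner x D (B *\<^sub>v vkron y v)) $ i
        = (?T1 + (complex_of_real \<gamma> \<cdot>\<^sub>v ?T2 + complex_of_real (- \<gamma> * \<nu>) \<cdot>\<^sub>v ?T3)) $ i"
      using E u v unfolding T2 T3 L_def
      by (simp add: partial_inner_def index_lcu_mat_mult_vec sum_subtractf sum_distrib_left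
          sum_negf algebra_simps del: index_mult_mat_vec)
  qed (simp add: partial_inner_def)
qed

lemma lcu_postselection_error:
  fixes E :: "nat \<Rightarrow> complex mat" and a :: "nat \<Rightarrow> complex" and \<gamma> \<nu> :: real
  assumes E: "\<And>j. j < M \<Longrightarrow> E j \<in> carrier_mat D D \<and> unitary_mat (E j)" and M: "M \<le> 2 ^ m"
    and x: "x \<in> carrier_vec (2 ^ m)" "vnorm x = 1" and y: "y \<in> carrier_vec (2 ^ m)" "vnorm y = 1"
    and u: "u \<in> carrier_vec D" and v: "v \<in> carrier_vec D" "vnorm v = 1"
    and B: "B \<in> carrier_mat (2 ^ m * D) (2 ^ m * D)" "opnorm (B - select_mat m D M E) \<le> \<epsilon>Q"
    and coeffs: "(\<Sum>j<M. cmod (complex_of_real \<gamma> * cnj (x $ j) * y $ j - a j)) \<le> \<epsilon>c"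
    and u_approx: "vnorm (u - complex_of_real \<nu> \<cdot>\<^sub>v v) \<le> \<epsilon>0"
    and "0 \<le> \<gamma>" "0 \<le> \<nu>"
  shows "vnorm (lcu_mat D M a E *\<^sub>v u - complex_of_real (\<gamma> * \<nu>) \<cdot>\<^sub>v partial_inner x D (B *\<^sub>v vkron y v))
    \<le> vnorm u * \<epsilon>c + \<gamma> * \<nu> * \<epsilon>Q + \<gamma> * \<epsilon>0"
proof -
  define b where "b j = cnj (x $ j) * y $ j" for j
  define T1 T2 T3 where "T1 = lcu_mat D M (\<lambda>j. a j - \<gamma> * b j) E *\<^sub>v u"
    and "T2 = lcu_mat D M b E *\<^sub>v (u - complex_of_real \<nu> \<cdot>\<^sub>v v)"
    and "T3 = partial_inner x D ((B - select_mat m D M E) *\<^sub>v vkron y v)"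
  have "vnorm T1 \<le> (\<Sum>j<M. cmod (a j - \<gamma> * b j)) * vnorm u"
    unfolding T1_def by (rule vnorm_lcu_mat_mult_vec_le[OF E u])
  also have "\<dots> \<le> \<epsilon>c * vnorm u"
    using coeffs by (intro mult_right_mono) (simp_all add: b_def norm_minus_commute mult.assoc)
  finally have T1: "vnorm T1 \<le> vnorm u * \<epsilon>c" by (simp add: mult.commute)
  have "vnorm T2 \<le> (\<Sum>j<M. cmod (b j)) * vnorm (u - complex_of_real \<nu> \<cdot>\<^sub>v v)"
    unfolding T2_def using u v by (intro vnorm_lcu_mat_mult_vec_le[OF E]) auto
  also have "\<dots> \<le> 1 * \<epsilon>0"
    using sum_cmod_mult_le_vnorm[of M x y] M x y u_approx
    by (intro mult_mono) (simp_all add: b_def norm_mult sum_nonneg)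
  finally have T2: "vnorm T2 \<le> \<epsilon>0" by simp
  have "vnorm T3 \<le> vnorm x * vnorm ((B - select_mat m D M E) *\<^sub>v vkron y v)"
    unfolding T3_def
    by (rule vnorm_partial_inner_le[OF x(1) mult_mat_vec_carrier[OF minus_carrier_mat[OF select_mat_carrier_mat]
        vkron_carrier_vec[OF y(1) v(1)]]])
  also have "\<dots> \<le> 1 * (opnorm (B - select_mat m D M E) * vnorm (vkron y v))"
    using x B y v by (simp add: vnorm_mult_vec_le_opnorm)
  also have "\<dots> \<le> \<epsilon>Q"
    using B y v by (simp add: vnorm_vkron)
  finally have T3: "vnorm T3 \<le> \<epsilon>Q" .
  have "dim_vec T2 = dim_vec T1" "dim_vec T3 = dim_vec T1"
    by (simp_all add: T1_def T2_def T3_def partial_inner_def)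
  then have "vnorm (T1 + (complex_of_real \<gamma> \<cdot>\<^sub>v T2 + complex_of_real (- \<gamma> * \<nu>) \<cdot>\<^sub>v T3))
      \<le> vnorm T1 + \<gamma> * vnorm T2 + \<gamma> * \<nu> * vnorm T3"
    using vnorm_add_smult_le[of T2 T1 T3 "complex_of_real \<gamma>" "complex_of_real (- \<gamma> * \<nu>)"]
      \<open>0 \<le> \<gamma>\<close> \<open>0 \<le> \<nu>\<close>
    by (simp only: norm_of_real abs_mult abs_minus abs_of_nonneg)
  also have "\<dots> \<le> vnorm u * \<epsilon>c + \<gamma> * \<epsilon>0 + \<gamma> * \<nu> * \<epsilon>Q"
    using T1 T2 T3 \<open>0 \<le> \<gamma>\<close> \<open>0 \<le> \<nu>\<close> by (intro add_mono mult_left_mono) simp_all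
  also have "T1 + (complex_of_real \<gamma> \<cdot>\<^sub>v T2 + complex_of_real (- \<gamma> * \<nu>) \<cdot>\<^sub>v T3)
      = lcu_mat D M a E *\<^sub>v u - complex_of_real (\<gamma> * \<nu>) \<cdot>\<^sub>v partial_inner x D (B *\<^sub>v vkron y v)"
    unfolding T1_def T2_def T3_def b_def
    by (rule lcu_postselection_decomposition[symmetric, OF _ M x(1) y(1) u v(1) B(1)]) (use E in blast)
  finally show ?thesis by simp
qed

subsection \<open>Block encodings\<close>

lemma one_smult_mat [simp]: "(1 :: complex) \<cdot>\<^sub>m A = A"
  by (intro eq_matI) auto

lemma vnorm_unitary_ket0v:
  assumes "U \<in> carrier_mat (2 ^ m) (2 ^ m)" "unitary_mat U"
  shows "vnorm (U *\<^sub>v ket0v m) = 1"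
  using assms by (simp add: vnorm_unitary ket0v_def vnorm_unit_vec)

lemma postsel_no_ancilla:
  assumes "U \<in> carrier_mat (2 ^ b) (2 ^ b)"
  shows "postsel U 0 b = U *\<^sub>v ket0v b"
proof -
  have "postsel U 0 b = bra0_I 0 (2 ^ b) *\<^sub>v (U *\<^sub>v ket0v b)"
    unfolding postsel_def diff_zero using assms
    by (intro assoc_mult_mat_vec[of _ "2 ^ b" "2 ^ b"]) (auto simp: ket0v_def)
  also have "\<dots> = U *\<^sub>v ket0v b"
    using assms by (intro eq_vecI) (auto simp: bra0_I_mult_vec ket0v_def)
  finally show ?thesis .
qed

lemma success_prob_lower_bound:
  assumes be: "vec_block_encoding U \<alpha> a b \<epsilon> x" and "\<epsilon> \<le> vnorm x"
  shows "(vnorm x - \<epsilon>)\<^sup>2 / \<alpha>\<^sup>2 \<le> success_prob U a b"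
proof -
  define p where "p = postsel U a b"
  have dim: "dim_vec p = dim_vec x" and err: "vnorm (x - complex_of_real \<alpha> \<cdot>\<^sub>v p) \<le> \<epsilon>"
    using be by (simp_all add: vec_block_encoding_def p_def postsel_def)
  have "x = (x - complex_of_real \<alpha> \<cdot>\<^sub>v p) + complex_of_real \<alpha> \<cdot>\<^sub>v p"
    using dim by (intro eq_vecI) auto
  then have "vnorm x \<le> vnorm (x - complex_of_real \<alpha> \<cdot>\<^sub>v p) + \<bar>\<alpha>\<bar> * vnorm p"
    using vnorm_add_le[of "x - complex_of_real \<alpha> \<cdot>\<^sub>v p" "complex_of_real \<alpha> \<cdot>\<^sub>v p"] dim by simp
  then have "(vnorm x - \<epsilon>)\<^sup>2 \<le> (\<bar>\<alpha>\<bar> * vnorm p)\<^sup>2"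
    using err \<open>\<epsilon> \<le> vnorm x\<close> by (intro power_mono) auto
  then show ?thesis
    by (cases "\<alpha> = 0")
      (simp_all add: success_prob_def p_def[symmetric] divide_le_eq power_mult_distrib mult.commute)
qed

subsection \<open>The LCU circuit\<close>

lemma unitary_lcu_circuit:
  assumes UQ: "UQ \<in> carrier_mat (2 ^ mQ * (2 ^ mc * 2 ^ n)) (2 ^ mQ * (2 ^ mc * 2 ^ n))" "unitary_mat UQ"
    and Ocl: "Ocl \<in> carrier_mat (2 ^ mc) (2 ^ mc)" "unitary_mat Ocl"
    and Ocr: "Ocr \<in> carrier_mat (2 ^ mc) (2 ^ mc)" "unitary_mat Ocr"
    and U0: "U0 \<in> carrier_mat (2 ^ n) (2 ^ n)" "unitary_mat U0"
  shows "lcu_circuit mQ mc n UQ Ocl Ocr U0 \<in> carrier_mat (2 ^ (mc + mQ + n)) (2 ^ (mc + mQ + n))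
    \<and> unitary_mat (lcu_circuit mQ mc n UQ Ocl Ocr U0)"
proof -
  let ?N = "2 ^ mQ * (2 ^ mc * 2 ^ n) :: nat"
  have N: "2 ^ (mc + mQ + n) = ?N" by (simp add: power_add mult_ac)
  have one: "1\<^sub>m d \<in> carrier_mat d d \<and> unitary_mat (1\<^sub>m d)" for d
    by (simp add: unitary_mat_one)
  have kron: "kron A B \<in> carrier_mat (a * b) (a * b) \<and> unitary_mat (kron A B)"
    if "A \<in> carrier_mat a a \<and> unitary_mat A" "B \<in> carrier_mat b b \<and> unitary_mat B"
    for A B :: "complex mat" and a b
    using that unitary_mat_kron[of A a B b] by simp
  have K1: "kron (1\<^sub>m (2 ^ mQ)) (kron (adj Ocl) (1\<^sub>m (2 ^ n))) \<in> carrier_mat ?N ?N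
      \<and> unitary_mat (kron (1\<^sub>m (2 ^ mQ)) (kron (adj Ocl) (1\<^sub>m (2 ^ n))))"
    using Ocl by (intro kron one) (simp add: unitary_mat_adj)
  have K2: "kron (1\<^sub>m (2 ^ mQ)) (kron Ocr (1\<^sub>m (2 ^ n))) \<in> carrier_mat ?N ?N
      \<and> unitary_mat (kron (1\<^sub>m (2 ^ mQ)) (kron Ocr (1\<^sub>m (2 ^ n))))"
    using Ocr by (intro kron one) simp
  have K3: "kron (1\<^sub>m (2 ^ mQ * 2 ^ mc)) U0 \<in> carrier_mat ?N ?N
      \<and> unitary_mat (kron (1\<^sub>m (2 ^ mQ * 2 ^ mc)) U0)"
    using kron[OF one, of U0 "2 ^ n" "2 ^ mQ * 2 ^ mc"] U0 by (simp add: mult.assoc)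
  have mult: "A * B \<in> carrier_mat ?N ?N \<and> unitary_mat (A * B)"
    if "A \<in> carrier_mat ?N ?N \<and> unitary_mat A" "B \<in> carrier_mat ?N ?N \<and> unitary_mat B"
    for A B :: "complex mat"
    using that unitary_mat_mult[of A ?N B] mult_carrier_mat[of A ?N ?N B ?N] by blast
  show ?thesis
    unfolding lcu_circuit_def N using K1 K2 K3 UQ by (intro mult) auto
qed

lemma lcu_circuit_state_preparation:
  assumes Ocr: "Ocr \<in> carrier_mat (2 ^ mc) (2 ^ mc)" and U0: "U0 \<in> carrier_mat (2 ^ n) (2 ^ n)"
  shows "kron (1\<^sub>m (2 ^ mQ)) (kron Ocr (1\<^sub>m (2 ^ n))) *\<^sub>v (kron (1\<^sub>m (2 ^ mQ * 2 ^ mc)) U0 *\<^sub>v ket0v (mc + mQ + n))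
    = ket0_I mQ (2 ^ mc * 2 ^ n) *\<^sub>v vkron (Ocr *\<^sub>v ket0v mc) (U0 *\<^sub>v ket0v n)"
proof -
  let ?R = "2 ^ mQ :: nat" and ?C = "2 ^ mc :: nat" and ?D = "2 ^ n :: nat"
  define eR eC eD :: "complex vec"
    where "eR = unit_vec ?R 0" and "eC = unit_vec ?C 0" and "eD = unit_vec ?D 0"
  have v: "U0 *\<^sub>v eD \<in> carrier_vec ?D" using U0 by (simp add: eD_def)
  have "ket0v (mc + mQ + n) = vkron (vkron eR eC) eD"
    by (simp add: ket0v_def eR_def eC_def eD_def power_add mult_ac unit_vec_mult_vkron[symmetric])
  then have "kron (1\<^sub>m (?R * ?C)) U0 *\<^sub>v ket0v (mc + mQ + n) = vkron (vkron eR eC) (U0 *\<^sub>v eD)"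
    using U0 by (simp add: kron_mult_vkron[of _ "?R * ?C" "?R * ?C"] eR_def eC_def eD_def)
  then have v_prepared: "kron (1\<^sub>m (?R * ?C)) U0 *\<^sub>v ket0v (mc + mQ + n) = vkron eR (vkron eC (U0 *\<^sub>v eD))"
    by (simp add: vkron_assoc)
  have "kron (1\<^sub>m ?R) (kron Ocr (1\<^sub>m ?D)) *\<^sub>v vkron eR (vkron eC (U0 *\<^sub>v eD))
      = vkron (1\<^sub>m ?R *\<^sub>v eR) (kron Ocr (1\<^sub>m ?D) *\<^sub>v vkron eC (U0 *\<^sub>v eD))"
    using v by (simp add: kron_mult_vkron[OF one_carrier_mat kron_carrier_mat[OF Ocr one_carrier_mat]]
        eR_def eC_def)
  also have "\<dots> = vkron eR (vkron (Ocr *\<^sub>v ket0v mc) (U0 *\<^sub>v ket0v n))"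
    using v by (simp add: kron_mult_vkron[OF Ocr one_carrier_mat] eR_def eC_def eD_def ket0v_def)
  also have "\<dots> = ket0_I mQ (?C * ?D) *\<^sub>v vkron (Ocr *\<^sub>v ket0v mc) (U0 *\<^sub>v ket0v n)"
    unfolding eR_def using Ocr U0 by (intro ket0_I_mult_vec[symmetric]) (simp add: ket0v_def)
  finally show ?thesis unfolding v_prepared .
qed

lemma postsel_lcu_circuit:
  assumes UQ: "UQ \<in> carrier_mat (2 ^ mQ * (2 ^ mc * 2 ^ n)) (2 ^ mQ * (2 ^ mc * 2 ^ n))"
    and Ocl: "Ocl \<in> carrier_mat (2 ^ mc) (2 ^ mc)" and Ocr: "Ocr \<in> carrier_mat (2 ^ mc) (2 ^ mc)"
    and U0: "U0 \<in> carrier_mat (2 ^ n) (2 ^ n)"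
  shows "postsel (lcu_circuit mQ mc n UQ Ocl Ocr U0) (mc + mQ) (mc + mQ + n)
    = partial_inner (Ocl *\<^sub>v ket0v mc) (2 ^ n)
        ((bra0_I mQ (2 ^ mc * 2 ^ n) * UQ * ket0_I mQ (2 ^ mc * 2 ^ n))
          *\<^sub>v vkron (Ocr *\<^sub>v ket0v mc) (U0 *\<^sub>v ket0v n))"
proof -
  let ?C = "2 ^ mc :: nat" and ?D = "2 ^ n :: nat"
  let ?N = "2 ^ mQ * (?C * ?D)"
  define K1 K2 K3 where "K1 = kron (1\<^sub>m (2 ^ mQ)) (kron (adj Ocl) (1\<^sub>m ?D))"
    and "K2 = kron (1\<^sub>m (2 ^ mQ)) (kron Ocr (1\<^sub>m ?D))" and "K3 = kron (1\<^sub>m (2 ^ mQ * ?C)) U0"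
  define yv where "yv = vkron (Ocr *\<^sub>v ket0v mc) (U0 *\<^sub>v ket0v n)"
  define s where "s = UQ *\<^sub>v (ket0_I mQ (?C * ?D) *\<^sub>v yv)"
  have K: "K1 \<in> carrier_mat ?N ?N" "K2 \<in> carrier_mat ?N ?N" "K3 \<in> carrier_mat ?N ?N"
    using Ocl Ocr kron_carrier_mat[OF one_carrier_mat U0, of "2 ^ mQ * ?C"]
    by (simp_all add: K1_def K2_def K3_def mult.assoc)
  have yv: "yv \<in> carrier_vec (?C * ?D)"
    using Ocr U0 by (simp add: yv_def ket0v_def)
  have s: "s \<in> carrier_vec ?N"
    unfolding s_def by (rule mult_mat_vec_carrier[OF UQ mult_mat_vec_carrier[OF ket0_I_carrier_mat yv]])
  have e: "ket0v (mc + mQ + n) \<in> carrier_vec ?N"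
    by (simp add: ket0v_def power_add mult_ac)
  have W: "lcu_circuit mQ mc n UQ Ocl Ocr U0 = K1 * UQ * K2 * K3"
    by (simp add: lcu_circuit_def K1_def K2_def K3_def)
  have circuit: "lcu_circuit mQ mc n UQ Ocl Ocr U0 *\<^sub>v ket0v (mc + mQ + n) = K1 *\<^sub>v s"
    unfolding W assoc_mult4_mat_vec[OF K(1) UQ K(2,3) e]
    unfolding K2_def K3_def lcu_circuit_state_preparation[OF Ocr U0] s_def yv_def ..
  have bra: "bra0_I (mc + mQ) ?D \<in> carrier_mat ?D ?N"
    using bra0_I_carrier_mat[of "mc + mQ" ?D] by (simp add: power_add mult_ac)
  have "lcu_circuit mQ mc n UQ Ocl Ocr U0 \<in> carrier_mat ?N ?N"
    unfolding W by (rule mult_carrier_mat[OF mult_carrier_mat[OF mult_carrier_mat[OF K(1) UQ] K(2)] K(3)])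
  then have "postsel (lcu_circuit mQ mc n UQ Ocl Ocr U0) (mc + mQ) (mc + mQ + n)
      = bra0_I (mc + mQ) ?D *\<^sub>v (K1 *\<^sub>v s)"
    unfolding postsel_def circuit[symmetric] by (simp add: assoc_mult_mat_vec[OF bra _ e])
  also have "\<dots> = bra0_I mc ?D *\<^sub>v (bra0_I mQ (?C * ?D) *\<^sub>v (K1 *\<^sub>v s))"
    by (rule bra0_I_add_mult_vec) (use K(1) s in simp)
  also have "\<dots> = bra0_I mc ?D *\<^sub>v (kron (adj Ocl) (1\<^sub>m ?D) *\<^sub>v (bra0_I mQ (?C * ?D) *\<^sub>v s))"
    unfolding K1_def using Ocl s by (subst bra0_I_mult_kron_one) auto
  also have "\<dots> = partial_inner (Ocl *\<^sub>v ket0v mc) ?D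
      ((bra0_I mQ (?C * ?D) * UQ * ket0_I mQ (?C * ?D)) *\<^sub>v yv)"
  proof -
    have "bra0_I mQ (?C * ?D) *\<^sub>v s \<in> carrier_vec (?C * ?D)"
      by (rule mult_mat_vec_carrier[OF bra0_I_carrier_mat s])
    then show ?thesis
      unfolding top_left_block_mult_vec[OF UQ yv] s_def[symmetric] by (rule bra0_I_mult_kron_adj[OF Ocl])
  qed
  finally show ?thesis unfolding yv_def .
qed

lemma postsel_lcu_circuit_error:
  fixes A UQ Ocl Ocr U0 :: "complex mat" and u0 c :: "complex vec"
  assumes A: "A \<in> carrier_mat (2 ^ n) (2 ^ n)" and u0: "u0 \<in> carrier_vec (2 ^ n)"
    and c: "dim_vec c = M"
    and UQ: "block_encoding UQ 1 mQ \<epsilon>Q (Qmat A t k M mc n)"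
    and Oc: "state_prep_pair Ocl Ocr (vnorm1 c) mc \<epsilon>c c"
    and U0: "vec_block_encoding U0 (vnorm u0) 0 n \<epsilon>0 u0"
  shows "vnorm (LCU A t k c n *\<^sub>v u0 - complex_of_real (vnorm1 c * vnorm u0)
      \<cdot>\<^sub>v postsel (lcu_circuit mQ mc n UQ Ocl Ocr U0) (mc + mQ) (mc + mQ + n))
    \<le> vnorm u0 * (\<epsilon>c + vnorm1 c * \<epsilon>Q) + vnorm1 c * \<epsilon>0"
proof -
  define \<gamma> \<nu> where "\<gamma> = vnorm1 c" and "\<nu> = vnorm u0"
  define E where "E = (\<lambda>j. evol A t (k j))"
  define B where "B = bra0_I mQ (2 ^ mc * 2 ^ n) * UQ * ket0_I mQ (2 ^ mc * 2 ^ n)"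
  define x y v where "x = Ocl *\<^sub>v ket0v mc" and "y = Ocr *\<^sub>v ket0v mc" and "v = U0 *\<^sub>v ket0v n"
  have UQ': "UQ \<in> carrier_mat (2 ^ mQ * (2 ^ mc * 2 ^ n)) (2 ^ mQ * (2 ^ mc * 2 ^ n))"
    "opnorm (B - select_mat mc (2 ^ n) M E) \<le> \<epsilon>Q"
    using UQ by (simp_all add: block_encoding_def B_def E_def Qmat_eq_select_mat)
  have Oc': "M \<le> 2 ^ mc" "Ocl \<in> carrier_mat (2 ^ mc) (2 ^ mc)" "unitary_mat Ocl"
    "Ocr \<in> carrier_mat (2 ^ mc) (2 ^ mc)" "unitary_mat Ocr"
    "(\<Sum>j<M. cmod (complex_of_real \<gamma> * cnj (x $ j) * y $ j - c $ j)) \<le> \<epsilon>c"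
    using Oc c by (simp_all add: state_prep_pair_def \<gamma>_def x_def y_def Let_def)
  have U0c: "U0 \<in> carrier_mat (2 ^ n) (2 ^ n)" and "unitary_mat U0"
    using U0 by (simp_all add: vec_block_encoding_def)
  have "vnorm (u0 - complex_of_real \<nu> \<cdot>\<^sub>v v) \<le> \<epsilon>0"
    using U0 by (simp add: vec_block_encoding_def \<nu>_def v_def postsel_no_ancilla[OF U0c])
  have "vnorm (lcu_mat (2 ^ n) M (($) c) E *\<^sub>v u0 - complex_of_real (\<gamma> * \<nu>) \<cdot>\<^sub>v
      partial_inner x (2 ^ n) (B *\<^sub>v vkron y v)) \<le> vnorm u0 * \<epsilon>c + \<gamma> * \<nu> * \<epsilon>Q + \<gamma> * \<epsilon>0"
  proof (rule lcu_postselection_error)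
    show "E j \<in> carrier_mat (2 ^ n) (2 ^ n) \<and> unitary_mat (E j)" for j
      using A by (simp add: E_def evol_carrier_mat unitary_evol)
    show "x \<in> carrier_vec (2 ^ mc)" "y \<in> carrier_vec (2 ^ mc)" "v \<in> carrier_vec (2 ^ n)"
      using Oc' U0c by (simp_all add: x_def y_def v_def ket0v_def)
    show "vnorm x = 1" "vnorm y = 1" "vnorm v = 1"
      using Oc' U0c \<open>unitary_mat U0\<close> by (simp_all add: x_def y_def v_def vnorm_unitary_ket0v)
    show "B \<in> carrier_mat (2 ^ mc * 2 ^ n) (2 ^ mc * 2 ^ n)"
      unfolding B_def by (rule mult_carrier_mat[OF mult_carrier_mat[OF bra0_I_carrier_mat UQ'(1)]]) simp
    show "0 \<le> \<gamma>" "0 \<le> \<nu>"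
      by (simp_all add: \<gamma>_def \<nu>_def vnorm1_def sum_nonneg)
  qed fact+
  then show ?thesis
    unfolding postsel_lcu_circuit[OF UQ'(1) Oc'(2,4) U0c] LCU_eq_lcu_mat c
    by (simp add: B_def E_def x_def y_def v_def \<gamma>_def \<nu>_def algebra_simps)
qed

lemma lcu_circuit_vec_block_encoding:
  fixes A UQ Ocl Ocr U0 :: "complex mat" and u0 c :: "complex vec"
  assumes A: "A \<in> carrier_mat (2 ^ n) (2 ^ n)" and u0: "u0 \<in> carrier_vec (2 ^ n)"
    and c: "dim_vec c = M"
    and ev: "\<epsilon>v \<ge> vnorm (mexp ((- complex_of_real t) \<cdot>\<^sub>m A) *\<^sub>v u0 - LCU A t k c n *\<^sub>v u0)"
    and UQ: "block_encoding UQ 1 mQ \<epsilon>Q (Qmat A t k M mc n)"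
    and Oc: "state_prep_pair Ocl Ocr (vnorm1 c) mc \<epsilon>c c"
    and U0: "vec_block_encoding U0 (vnorm u0) 0 n \<epsilon>0 u0"
  shows "vec_block_encoding (lcu_circuit mQ mc n UQ Ocl Ocr U0) (vnorm1 c * vnorm u0)
    (mc + mQ) (mc + mQ + n) (\<epsilon>v + vnorm u0 * (\<epsilon>c + vnorm1 c * \<epsilon>Q) + vnorm1 c * \<epsilon>0)
    (mexp ((- complex_of_real t) \<cdot>\<^sub>m A) *\<^sub>v u0)"
proof -
  define ut where "ut = mexp ((- complex_of_real t) \<cdot>\<^sub>m A) *\<^sub>v u0"
  define W where "W = lcu_circuit mQ mc n UQ Ocl Ocr U0"
  define p where "p = complex_of_real (vnorm1 c * vnorm u0) \<cdot>\<^sub>v postsel W (mc + mQ) (mc + mQ + n)"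
  have "vnorm (ut - p) \<le> vnorm (ut - LCU A t k c n *\<^sub>v u0) + vnorm (LCU A t k c n *\<^sub>v u0 - p)"
    using A by (intro vnorm_diff_triangle) (simp_all add: ut_def p_def postsel_def LCU_eq_lcu_mat)
  also have "\<dots> \<le> \<epsilon>v + (vnorm u0 * (\<epsilon>c + vnorm1 c * \<epsilon>Q) + vnorm1 c * \<epsilon>0)"
    using ev postsel_lcu_circuit_error[OF A u0 c UQ Oc U0] unfolding ut_def p_def W_def
    by (rule add_mono)
  finally have "vnorm (ut - p) \<le> \<epsilon>v + vnorm u0 * (\<epsilon>c + vnorm1 c * \<epsilon>Q) + vnorm1 c * \<epsilon>0"
    by simp
  moreover have "W \<in> carrier_mat (2 ^ (mc + mQ + n)) (2 ^ (mc + mQ + n)) \<and> unitary_mat W"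
    using UQ Oc U0 unfolding W_def block_encoding_def state_prep_pair_def vec_block_encoding_def
    by (intro unitary_lcu_circuit) (simp_all add: Qmat_eq_select_mat)
  ultimately show ?thesis
    using A u0 by (simp add: vec_block_encoding_def ut_def p_def W_def)
qed

theorem lemma6:
  fixes n M mc mQ :: nat
    and A UQ Ocl Ocr U0 :: "complex mat"
    and t \<epsilon>v \<epsilon>Q \<epsilon>c \<epsilon>0 \<epsilon> :: real
    and u0 c :: "complex vec"
    and k :: "nat \<Rightarrow> real"
  assumes A: "A \<in> carrier_mat (2^n) (2^n)"
    and t: "t > 0"
    and u0: "u0 \<in> carrier_vec (2^n)"
    and c: "dim_vec c = M"
    and ev: "\<epsilon>v \<ge> vnorm (mexp ((- complex_of_real t) \<cdot>\<^sub>m A) *\<^sub>v u0 - LCU A t k c n *\<^sub>v u0)"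
    and UQ: "block_encoding UQ 1 mQ \<epsilon>Q (Qmat A t k M mc n)"
    and Oc: "state_prep_pair Ocl Ocr (vnorm1 c) mc \<epsilon>c c"
    and U0: "vec_block_encoding U0 (vnorm u0) 0 n \<epsilon>0 u0"
    and err: "\<epsilon>v + vnorm u0 * (\<epsilon>c + vnorm1 c * \<epsilon>Q) + vnorm1 c * \<epsilon>0 \<le> \<epsilon>"
  shows "vec_block_encoding (lcu_circuit mQ mc n UQ Ocl Ocr U0) (vnorm1 c * vnorm u0)
           (mc + mQ) (mc + mQ + n) \<epsilon> (mexp ((- complex_of_real t) \<cdot>\<^sub>m A) *\<^sub>v u0)
       \<and> (let \<epsilon>' = \<epsilon>v + vnorm u0 * (\<epsilon>c + vnorm1 c * \<epsilon>Q) + vnorm1 c * \<epsilon>0;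
              ut = mexp ((- complex_of_real t) \<cdot>\<^sub>m A) *\<^sub>v u0 in
          \<epsilon>' \<le> vnorm ut \<longrightarrow>
          success_prob (lcu_circuit mQ mc n UQ Ocl Ocr U0) (mc + mQ) (mc + mQ + n)
            \<ge> (vnorm ut - \<epsilon>')\<^sup>2 / ((vnorm u0)\<^sup>2 * (vnorm1 c)\<^sup>2))"
proof -
  note be = lcu_circuit_vec_block_encoding[OF A u0 c ev UQ Oc U0]
  have "vec_block_encoding (lcu_circuit mQ mc n UQ Ocl Ocr U0) (vnorm1 c * vnorm u0)
      (mc + mQ) (mc + mQ + n) \<epsilon> (mexp ((- complex_of_real t) \<cdot>\<^sub>m A) *\<^sub>v u0)"
    using be err by (simp add: vec_block_encoding_def)
  moreover have "(vnorm1 c * vnorm u0)\<^sup>2 = (vnorm u0)\<^sup>2 * (vnorm1 c)\<^sup>2"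
    by (simp add: power_mult_distrib)
  ultimately show ?thesis
    using success_prob_lower_bound[OF be] by (simp add: Let_def)
qed

end
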